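(* Let $S$ be a strongly $E^*$-unitary inverse semigroup, let $R$ be a commutative unital ring, and let $\varphi_1:S^\times\to G_1$ and $\varphi_2:S^\times\to G_2$ be two pure gradings of $S$. Then $L_R(S,\varphi_1)\cong L_R(S,\varphi_2)$ as $R$-algebras.
   Context: $S$ is an inverse semigroup with zero, $s^*$ the unique inverse of $s$, $E$ its idempotents (a meet semilattice with $x\wedge y=xy$, least element $0$), $S^\times=S\setminus\{0\}$, $E^\times=E\setminus\{0\}$. A pure grading is a map $\varphi:S^\times\to G$ to a group with $\varphi(ab)=\varphi(a)\varphi(b)$ whenever $ab\ne0$ and $\varphi^{-1}(1_G)=E^\times$; $S$ is strongly $E^*$-unitary if it has one. For $g\in G$, $E_g=\{x\in E: x\le ss^*$ for some $s$ with $\varphi(s)=g\}$ if $\varphi^{-1}(g)\ne\emptyset$, else $\{0\}$. $\phi_g:E_{g^{-1}}\to E_g$, $x\mapsto sxs^*$ (any $s$ with $\varphi(s)=g$, $x\le s^*s$) is a meet-semilattice isomorphism. For a meet semilattice $P$ with $0$: a filter is a subset $F$, $\emptyset\ne F\ne P$, closed upwards and under meets; $F(P)$ has topology generated by $\{F:x\in F\}$; tight filters $T(P)$ are the closure of the ultrafilters; $V^P_{(x:x_1,\dots,x_n)}=\{\xi\in T(P):x\in\xi, x_i\notin\xi\}$; $\mathcal T_c(P)$ is the generalized Boolean algebra of compact open subsets of $T(P)$. $\mathcal T_c(E_g)$ is identified with the ideal of $\mathcal T_c(E)$ consisting of compact open sets contained in $\bigcup_{x\in E_g}V^E_x$ (via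 $V^{E_g}_{(x:x_1,\dots)}\mapsto V^E_{(x:x_1,\dots)}$), and $\hat\phi_g:\mathcal T_c(E_{g^{-1}})\to\mathcal T_c(E_g)$ is the isomorphism induced by $\phi_g$ ($V_{(x:x_1,\dots,x_n)}\mapsto V_{(\phi_g(x):\phi_g(x_1),\dots,\phi_g(x_n))}$). $\Phi=(\{\mathcal T_c(E_g)\},\{\hat\phi_g\})$ is a partial action of $G$ on $\mathcal T_c(E)$. For a partial action $\Phi=(\{\mathcal I_t\},\{\phi_t\})$ on a generalized Boolean algebra $\mathcal B$ and commutative unital ring $R$: $\mathrm{Lc}(R,\mathcal B)$ is the $R$-algebra of functions $f:R\setminus\{0\}\to\mathcal B$ with pairwise disjoint values, almost all $0$, viewed as the function $\sum_r r1_{f(r)}$ (equivalently locally constant compactly supported $R$-valued functions on the Stone dual of $\mathcal B$); the partial skew group ring $\mathrm{Lc}(R,\mathcal B)\rtimes_\Phi G$ consists of finite sums $\sum_t f_t\delta_t$, $f_t\in\mathrm{Lc}(R,\mathcal I_t)$, with $(a\delta_s)(b\delta_t)=\tilde\phi_s(\tilde\phi_{s^{-1}}(a)b)\delta_{st}$, $\tilde\phi_t(f)=\phi_t\circ f$. Define $L_R(S,\varphi):=\mathrm{Lc}(R,\mathcal T_c(E))\rtimes_\Phi G$. *)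

theory Defs
  imports "HOL-Analysis.Abstract_Topology" "HOL-Algebra.Group"
begin

text \<open>The inverse semigroup S with zero is the whole type 'a; multiplication is (*) and the
zero is 0 (class mult_zero: 0 * a = 0 = a * 0).\<close>

definition inverse_semigroup_with_zero :: "'a::{semigroup_mult,mult_zero} itself \<Rightarrow> bool" where
  "inverse_semigroup_with_zero _ \<longleftrightarrow> (\<forall>s::'a. \<exists>!t. s * t * s = s \<and> t * s * t = t)"

definition sinv :: "'a::{semigroup_mult,mult_zero} \<Rightarrow> 'a" where
  "sinv s = (THE t. s * t * s = s \<and> t * s * t = t)"

definition idems :: "'a::{semigroup_mult,mult_zero} set" where
  "idems = {e. e * e = e}"

definition idem_le :: "'a::{semigroup_mult,mult_zero} \<Rightarrow> 'a \<Rightarrow> bool" where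
  "idem_le x y \<longleftrightarrow> x * y = x"

definition pure_grading :: "('g, 'b) monoid_scheme \<Rightarrow> ('a::{semigroup_mult,mult_zero} \<Rightarrow> 'g) \<Rightarrow> bool" where
  "pure_grading G \<phi> \<longleftrightarrow> group G
     \<and> (\<forall>s. s \<noteq> 0 \<longrightarrow> \<phi> s \<in> carrier G)
     \<and> (\<forall>a b. a \<noteq> 0 \<longrightarrow> b \<noteq> 0 \<longrightarrow> a * b \<noteq> 0 \<longrightarrow> \<phi> (a * b) = \<phi> a \<otimes>\<^bsub>G\<^esub> \<phi> b)
     \<and> {s. s \<noteq> 0 \<and> \<phi> s = \<one>\<^bsub>G\<^esub>} = idems - {0}"

definition Eg :: "('a::{semigroup_mult,mult_zero} \<Rightarrow> 'g) \<Rightarrow> 'g \<Rightarrow> 'a set" where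
  "Eg \<phi> g = (if \<exists>s. s \<noteq> 0 \<and> \<phi> s = g
              then {x \<in> idems. \<exists>s. s \<noteq> 0 \<and> \<phi> s = g \<and> idem_le x (s * sinv s)}
              else {0})"

definition phig :: "('a::{semigroup_mult,mult_zero} \<Rightarrow> 'g) \<Rightarrow> 'g \<Rightarrow> 'a \<Rightarrow> 'a" where
  "phig \<phi> g x = (let s = (SOME s. s \<noteq> 0 \<and> \<phi> s = g \<and> idem_le x (sinv s * s)) in s * x * sinv s)"

definition is_filter :: "'a::{semigroup_mult,mult_zero} set \<Rightarrow> bool" where
  "is_filter F \<longleftrightarrow> F \<subseteq> idems \<and> F \<noteq> {} \<and> F \<noteq> idems
     \<and> (\<forall>x\<in>F. \<forall>y\<in>idems. idem_le x y \<longrightarrow> y \<in> F)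
     \<and> (\<forall>x\<in>F. \<forall>y\<in>F. x * y \<in> F)"

definition filters :: "'a::{semigroup_mult,mult_zero} set set" where
  "filters = {F. is_filter F}"

definition ultrafilters :: "'a::{semigroup_mult,mult_zero} set set" where
  "ultrafilters = {F \<in> filters. \<forall>F'\<in>filters. F \<subseteq> F' \<longrightarrow> F' = F}"

text \<open>topology on the filters: generated by the sets {F. x \<in> F} and their complements
  {F. x \<notin> F} (the product topology from {0,1}^E)\<close>
definition filter_top :: "'a::{semigroup_mult,mult_zero} set topology" where
  "filter_top = topology_generated_by
     ({filters} \<union> (\<lambda>x. {F \<in> filters. x \<in> F}) ` idems \<union> (\<lambda>x. {F \<in> filters. x \<notin> F}) ` idems)"

definition tight_filters :: "'a::{semigroup_mult,mult_zero} set set" where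
  "tight_filters = filter_top closure_of ultrafilters"

definition tight_top :: "'a::{semigroup_mult,mult_zero} set topology" where
  "tight_top = subtopology filter_top tight_filters"

definition Vset :: "'a::{semigroup_mult,mult_zero} \<Rightarrow> 'a set \<Rightarrow> 'a set set" where
  "Vset x Xs = {\<xi> \<in> tight_filters. x \<in> \<xi> \<and> (\<forall>y\<in>Xs. y \<notin> \<xi>)}"

definition Tc :: "'a::{semigroup_mult,mult_zero} set set set" where
  "Tc = {U. openin tight_top U \<and> compactin tight_top U}"

definition Tcg :: "('a::{semigroup_mult,mult_zero} \<Rightarrow> 'g) \<Rightarrow> 'g \<Rightarrow> 'a set set set" where
  "Tcg \<phi> g = {U \<in> Tc. U \<subseteq> (\<Union>x\<in>Eg \<phi> g. Vset x {})}"

text \<open>hat phi_g : T_c(E_{g^{-1}}) \<rightarrow> T_c(E_g), determined by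
  V_(x:x_1..x_n) \<mapsto> V_(phi_g x : phi_g x_1 .. phi_g x_n); on a general compact open set U
  it is the union of the images of the basic sets V_(x:x_1..x_n) (x, x_i \<in> E_{g^{-1}}) contained in U.\<close>
definition hatphi :: "('g, 'b) monoid_scheme \<Rightarrow> ('a::{semigroup_mult,mult_zero} \<Rightarrow> 'g) \<Rightarrow> 'g
    \<Rightarrow> 'a set set \<Rightarrow> 'a set set" where
  "hatphi G \<phi> g U = \<Union>{Vset (phig \<phi> g x) (phig \<phi> g ` Xs) | x Xs.
       x \<in> Eg \<phi> (inv\<^bsub>G\<^esub> g) \<and> finite Xs \<and> Xs \<subseteq> Eg \<phi> (inv\<^bsub>G\<^esub> g) \<and> Vset x Xs \<subseteq> U}"

text \<open>Lc(R,B): an element f : R - {0} \<rightarrow> B (pairwise disjoint values, almost all empty) is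
  identified with the function \<Sum> r 1_{f(r)} on the tight spectrum (points are filters,
  i.e. sets of elements of S); f(r) is then the preimage of r.\<close>
definition Lc :: "'a set set set \<Rightarrow> ('a set \<Rightarrow> 'r::comm_ring_1) set" where
  "Lc B = {h. finite (range h) \<and> (\<forall>r. r \<noteq> 0 \<longrightarrow> {\<xi>. h \<xi> = r} \<in> B)}"

text \<open>tilde phi_t (f) = hat phi_t \<circ> f\<close>
definition tildephi :: "('g, 'b) monoid_scheme \<Rightarrow> ('a::{semigroup_mult,mult_zero} \<Rightarrow> 'g) \<Rightarrow> 'g
    \<Rightarrow> ('a set \<Rightarrow> 'r::comm_ring_1) \<Rightarrow> ('a set \<Rightarrow> 'r)" where
  "tildephi G \<phi> t h = (\<lambda>\<xi>. \<Sum>r\<in>range h - {0}. if \<xi> \<in> hatphi G \<phi> t {\<eta>. h \<eta> = r} then r else 0)"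

text \<open>Elements \<Sum>_t f_t \<delta>_t of Lc(R,T_c(E)) \<rtimes> G are represented by the coefficient map t \<mapsto> f_t.\<close>
definition skew_carrier :: "('g, 'b) monoid_scheme \<Rightarrow> ('a::{semigroup_mult,mult_zero} \<Rightarrow> 'g)
    \<Rightarrow> ('g \<Rightarrow> 'a set \<Rightarrow> 'r::comm_ring_1) set" where
  "skew_carrier G \<phi> = {a. finite {t. a t \<noteq> (\<lambda>_. 0)}
       \<and> (\<forall>t. a t \<noteq> (\<lambda>_. 0) \<longrightarrow> t \<in> carrier G)
       \<and> (\<forall>t \<in> carrier G. a t \<in> Lc (Tcg \<phi> t))}"

definition skew_add :: "('g \<Rightarrow> 'a set \<Rightarrow> 'r::comm_ring_1) \<Rightarrow> ('g \<Rightarrow> 'a set \<Rightarrow> 'r) \<Rightarrow> ('g \<Rightarrow> 'a set \<Rightarrow> 'r)" where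
  "skew_add a b = (\<lambda>t \<xi>. a t \<xi> + b t \<xi>)"

definition skew_smult :: "'r::comm_ring_1 \<Rightarrow> ('g \<Rightarrow> 'a set \<Rightarrow> 'r) \<Rightarrow> ('g \<Rightarrow> 'a set \<Rightarrow> 'r)" where
  "skew_smult r a = (\<lambda>t \<xi>. r * a t \<xi>)"

text \<open>(a \<delta>_s)(b \<delta>_t) = tilde phi_s(tilde phi_{s^{-1}}(a) b) \<delta>_{st}, extended bilinearly\<close>
definition skew_mult :: "('g, 'b) monoid_scheme \<Rightarrow> ('a::{semigroup_mult,mult_zero} \<Rightarrow> 'g)
    \<Rightarrow> ('g \<Rightarrow> 'a set \<Rightarrow> 'r::comm_ring_1) \<Rightarrow> ('g \<Rightarrow> 'a set \<Rightarrow> 'r) \<Rightarrow> ('g \<Rightarrow> 'a set \<Rightarrow> 'r)" where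
  "skew_mult G \<phi> a b = (\<lambda>u \<xi>. \<Sum>(s, t) \<in> {(s, t). a s \<noteq> (\<lambda>_. 0) \<and> b t \<noteq> (\<lambda>_. 0) \<and> s \<otimes>\<^bsub>G\<^esub> t = u}.
       tildephi G \<phi> s (\<lambda>\<eta>. tildephi G \<phi> (inv\<^bsub>G\<^esub> s) (a s) \<eta> * b t \<eta>) \<xi>)"

definition LR_isomorphic :: "('g1, 'b1) monoid_scheme \<Rightarrow> ('a::{semigroup_mult,mult_zero} \<Rightarrow> 'g1)
    \<Rightarrow> ('g2, 'b2) monoid_scheme \<Rightarrow> ('a \<Rightarrow> 'g2) \<Rightarrow> 'r::comm_ring_1 itself \<Rightarrow> bool" where
  "LR_isomorphic G1 \<phi>1 G2 \<phi>2 _ \<longleftrightarrow>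
     (\<exists>\<Psi> :: ('g1 \<Rightarrow> 'a set \<Rightarrow> 'r) \<Rightarrow> ('g2 \<Rightarrow> 'a set \<Rightarrow> 'r).
        bij_betw \<Psi> (skew_carrier G1 \<phi>1) (skew_carrier G2 \<phi>2)
      \<and> (\<forall>a\<in>skew_carrier G1 \<phi>1. \<forall>b\<in>skew_carrier G1 \<phi>1.
            \<Psi> (skew_add a b) = skew_add (\<Psi> a) (\<Psi> b)
          \<and> \<Psi> (skew_mult G1 \<phi>1 a b) = skew_mult G2 \<phi>2 (\<Psi> a) (\<Psi> b))
      \<and> (\<forall>r. \<forall>a\<in>skew_carrier G1 \<phi>1. \<Psi> (skew_smult r a) = skew_smult r (\<Psi> a)))"

end

theory Submission
  imports Defs
begin

text \<open>Every s \<in> S acts on filters of E by \<xi> \<mapsto> up-closure of s \<xi> s^*, defined when s^* s \<in> \<xi>; this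
  action preserves tight filters. For a pure grading, elements of the same degree act in the same
  way wherever both are defined (if \<phi> s = \<phi> t and x \<le> s^* s, t^* t then s x t^* has degree 1, hence is
  idempotent, and s x = t x). So each g \<in> G acts by a partial homeomorphism of the tight spectrum,
  and this is exactly the dual of the partial action of G on T_c(E); in these terms the product of
  L_R(S,\<phi>) reads (a b)_u(\<xi>) = \<Sum>_{st = u} a_s(\<xi>) b_t(\<theta>_{s\<inverse>}(\<xi>)).

  Two pure gradings \<phi>1, \<phi>2 of S see the same germs: if \<phi>1 s = \<phi>1 t and s s^* t t^* \<noteq> 0 then
  \<phi>2 s = \<phi>2 t. Hence a tight filter \<xi> in the domain of g \<in> G1 determines a degree c(g,\<xi>) \<in> G2,
  locally constant in \<xi>, and (\<Psi> a)_h(\<xi>) = a_{c\<inverse>(h,\<xi>)}(\<xi>) is an R-algebra isomorphism. Its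
  coefficients have finite support because the support of each a_g is compact and c(g,-) is
  locally constant.\<close>

lemma openin_level_mult:
  fixes f g :: "'x \<Rightarrow> 'r::mult_zero"
  assumes "\<And>p. p \<noteq> 0 \<Longrightarrow> openin X {x. f x = p}" and "\<And>q. q \<noteq> 0 \<Longrightarrow> openin X {x. g x = q}"
    and "r \<noteq> 0"
  shows "openin X {x. f x * g x = r}"
proof -
  have "{x. f x * g x = r} = (\<Union>(p, q) \<in> {(p, q). p \<noteq> 0 \<and> q \<noteq> 0 \<and> p * q = r}. {x. f x = p} \<inter> {x. g x = q})"
    using assms(3) by fastforce
  thus ?thesis using assms(1,2) by (auto intro!: openin_Union)
qed

section \<open>Inverse semigroups with zero\<close>

locale inverse_semigroup_zero =
  fixes ty :: "'a::{semigroup_mult,mult_zero} itself"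
  assumes inverse_semigroup: "inverse_semigroup_with_zero TYPE('a)"
begin

lemma sinv_props: "(s::'a) * sinv s * s = s \<and> sinv s * s * sinv s = sinv s"
proof -
  have "\<exists>!t. s * t * s = s \<and> t * s * t = t"
    using inverse_semigroup unfolding inverse_semigroup_with_zero_def by blast
  thus ?thesis unfolding sinv_def by (rule theI')
qed

lemma mult_sinv_mult: "(s::'a) * sinv s * s = s"
  using sinv_props by blast

lemma sinv_mult_sinv: "sinv (s::'a) * s * sinv s = sinv s"
  using sinv_props by blast

lemma sinv_absorb:
  "(s::'a) * (sinv s * s) = s" "sinv s * (s * sinv s) = sinv s"
  "s * (sinv s * (s * x)) = s * x" "sinv s * (s * (sinv s * x)) = sinv s * x"
  by (metis mult_sinv_mult sinv_mult_sinv mult.assoc)+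

lemma sinv_unique: "(s::'a) * t * s = s \<Longrightarrow> t * s * t = t \<Longrightarrow> sinv s = t"
  using inverse_semigroup sinv_props[of s] unfolding inverse_semigroup_with_zero_def by blast

lemma sinv_sinv [simp]: "sinv (sinv (s::'a)) = s"
  by (rule sinv_unique) (simp_all add: mult_sinv_mult sinv_mult_sinv)

lemma sinv_idem: "(e::'a) * e = e \<Longrightarrow> sinv e = e"
  by (rule sinv_unique) simp_all

lemma sinv_zero [simp]: "sinv (0::'a) = 0"
  by (rule sinv_unique) simp_all

lemma sinv_nonzero: "(s::'a) \<noteq> 0 \<Longrightarrow> sinv s \<noteq> 0"
  by (metis mult_sinv_mult mult_zero_left mult_zero_right)

lemma idem_absorb: "(e::'a) * e = e \<Longrightarrow> e * (e * x) = e * x"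
  by (metis mult.assoc)

lemma range_idem: "((s::'a) * sinv s) * (s * sinv s) = s * sinv s"
  by (metis mult_sinv_mult mult.assoc)

lemma domain_idem: "(sinv (s::'a) * s) * (sinv s * s) = sinv s * s"
  by (metis sinv_mult_sinv mult.assoc)

text \<open>The classical argument: the inverse a of ef satisfies fae = a by uniqueness of inverses,
  hence a is idempotent, hence self-inverse, hence equal to ef.\<close>

lemma idem_mult_closed:
  assumes e: "(e::'a) * e = e" and f: "f * f = f"
  shows "(e * f) * (e * f) = e * f"
proof -
  define a where "a = sinv (e * f)"
  have A1: "(e*f)*a*(e*f) = e*f" and A2: "a*(e*f)*a = a"
    unfolding a_def using sinv_props by blast+
  have "(e*f)*(f*a*e)*(e*f) = e*(f*f)*a*(e*e)*f" by (simp add: mult.assoc)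
  also have "\<dots> = e*f" using A1 e f by (simp add: mult.assoc)
  finally have B1: "(e*f)*(f*a*e)*(e*f) = e*f" .
  have "(f*a*e)*(e*f)*(f*a*e) = f*(a*(e*f)*a)*e"
    using e f by (simp add: mult.assoc idem_absorb[OF e] idem_absorb[OF f])
  also have "\<dots> = f*a*e" using A2 by (simp add: mult.assoc)
  finally have B2: "(f*a*e)*(e*f)*(f*a*e) = f*a*e" .
  have fae: "f*a*e = a" using sinv_unique[OF B1 B2] a_def by simp
  have "a * a = f*(a*(e*f)*a)*e" using fae by (metis mult.assoc)
  also have "\<dots> = a" using A2 fae by (simp add: mult.assoc)
  finally have aa: "a*a = a" .
  have "sinv a = e * f" by (rule sinv_unique[OF A2 A1])
  with sinv_idem[OF aa] have "e*f = a" by simp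
  thus ?thesis using aa by simp
qed

lemma idems_commute:
  assumes e: "(e::'a) * e = e" and f: "f * f = f"
  shows "e * f = f * e"
proof -
  have "(e*f)*(f*e)*(e*f) = (e*f)*(e*f)" "(f*e)*(e*f)*(f*e) = (f*e)*(f*e)"
    using e f by (simp_all add: mult.assoc idem_absorb[OF e] idem_absorb[OF f])
  hence "sinv (e*f) = f*e"
    using idem_mult_closed[OF e f] idem_mult_closed[OF f e] by (intro sinv_unique) simp_all
  moreover have "sinv (e*f) = e*f" by (rule sinv_idem[OF idem_mult_closed[OF e f]])
  ultimately show ?thesis by simp
qed

lemma sinv_mult: "sinv ((a::'a) * b) = sinv b * sinv a"
proof (rule sinv_unique)
  have c: "(b * sinv b) * (sinv a * a) = (sinv a * a) * (b * sinv b)"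
    by (rule idems_commute[OF range_idem domain_idem])
  have "a * b * (sinv b * sinv a) * (a * b) = a * ((b * sinv b) * (sinv a * a)) * b"
    by (simp add: mult.assoc)
  also have "\<dots> = a * ((sinv a * a) * (b * sinv b)) * b" using c by simp
  also have "\<dots> = (a * sinv a * a) * (b * sinv b * b)" by (simp add: mult.assoc)
  finally show "a * b * (sinv b * sinv a) * (a * b) = a * b" by (simp add: mult_sinv_mult)
  have "sinv b * sinv a * (a * b) * (sinv b * sinv a) = sinv b * ((sinv a * a) * (b * sinv b)) * sinv a"
    by (simp add: mult.assoc)
  also have "\<dots> = sinv b * ((b * sinv b) * (sinv a * a)) * sinv a" using c by simp
  also have "\<dots> = (sinv b * b * sinv b) * (sinv a * a * sinv a)" by (simp add: mult.assoc)
  finally show "sinv b * sinv a * (a * b) * (sinv b * sinv a) = sinv b * sinv a"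
    by (simp add: sinv_mult_sinv)
qed

lemma idem_le_trans: "idem_le (x::'a) y \<Longrightarrow> idem_le y z \<Longrightarrow> idem_le x z"
  unfolding idem_le_def by (metis mult.assoc)

lemma idem_le_refl: "(x::'a) * x = x \<Longrightarrow> idem_le x x"
  unfolding idem_le_def by simp

lemma idem_le_mult1: "(x::'a) * x = x \<Longrightarrow> y * y = y \<Longrightarrow> idem_le (x * y) x"
  unfolding idem_le_def by (metis idems_commute mult.assoc)

lemma idem_le_mult2: "(x::'a) * x = x \<Longrightarrow> y * y = y \<Longrightarrow> idem_le (x * y) y"
  unfolding idem_le_def by (simp add: mult.assoc)

lemma idems_mult: "x \<in> idems \<Longrightarrow> y \<in> idems \<Longrightarrow> (x::'a) * y \<in> idems"
  unfolding idems_def using idem_mult_closed by blast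

lemma zero_in_idems [simp]: "(0::'a) \<in> idems"
  unfolding idems_def by simp

lemma conj_idem: "(x::'a) * x = x \<Longrightarrow> (s * x * sinv s) * (s * x * sinv s) = s * x * sinv s"
proof -
  assume x: "x * x = x"
  have "(s * x * sinv s) * (s * x * sinv s) = s * (x * (sinv s * s)) * x * sinv s"
    by (simp add: mult.assoc)
  also have "\<dots> = (s * sinv s * s) * (x * x) * sinv s"
    using idems_commute[OF x domain_idem] by (simp add: mult.assoc)
  finally show ?thesis using x by (simp add: mult_sinv_mult)
qed

lemma sinv_conj_conj: "(x::'a) * x = x \<Longrightarrow> sinv t * (t * x * sinv t) * t = x * (sinv t * t)"
proof -
  assume x: "x * x = x"
  have "sinv t * (t * x * sinv t) * t = (sinv t * t) * x * (sinv t * t)" by (simp add: mult.assoc)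
  also have "\<dots> = x * ((sinv t * t) * (sinv t * t))"
    using idems_commute[OF x domain_idem] by (simp add: mult.assoc sinv_absorb)
  finally show ?thesis by (simp add: domain_idem)
qed

lemma conj_sinv_conj: "(x::'a) * x = x \<Longrightarrow> s * (sinv s * x * s) * sinv s = x * (s * sinv s)"
  using sinv_conj_conj[of x "sinv s"] by simp

lemma conj_mono:
  assumes p: "(p::'a) * p = p" and z: "z * z = z" and le: "idem_le p z"
  shows "idem_le (t * p * sinv t) (t * z * sinv t)"
proof -
  have "(t * p * sinv t) * (t * z * sinv t) = t * p * ((sinv t * t) * z) * sinv t"
    by (simp add: mult.assoc)
  also have "\<dots> = t * (p * z) * (sinv t * t * sinv t)"
    using idems_commute[OF domain_idem z] by (simp add: mult.assoc)
  finally show ?thesis using le unfolding idem_le_def by (simp add: sinv_mult_sinv)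
qed

lemma conj_mult:
  "(y::'a) * y = y \<Longrightarrow> (s * x * sinv s) * (s * y * sinv s) = s * (x * y) * sinv s"
proof -
  assume y: "y * y = y"
  have "(s * x * sinv s) * (s * y * sinv s) = s * x * ((sinv s * s) * y) * sinv s"
    by (simp add: mult.assoc)
  also have "\<dots> = s * x * y * (sinv s * s * sinv s)"
    using idems_commute[OF domain_idem y] by (simp add: mult.assoc)
  finally show ?thesis by (simp add: sinv_mult_sinv mult.assoc sinv_absorb)
qed

lemma conj_le_range: "(x::'a) * x = x \<Longrightarrow> idem_le (t * x * sinv t) (t * sinv t)"
  unfolding idem_le_def by (simp add: mult.assoc sinv_absorb)

lemma conj_eq:
  assumes "(s::'a) * x = t * x" "x * x = x"
  shows "s * x * sinv s = t * x * sinv t"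
proof -
  have "s * x * sinv s = (s * x) * sinv (s * x)"
    using assms(2) by (simp add: sinv_mult sinv_idem mult.assoc idem_absorb)
  also have "\<dots> = (t * x) * sinv (t * x)" using assms(1) by simp
  also have "\<dots> = t * x * sinv t"
    using assms(2) by (simp add: sinv_mult sinv_idem mult.assoc idem_absorb)
  finally show ?thesis .
qed

lemma filter_in_idems: "is_filter F \<Longrightarrow> x \<in> F \<Longrightarrow> (x::'a) \<in> idems"
  unfolding is_filter_def by blast

lemma filter_idem: "is_filter F \<Longrightarrow> x \<in> F \<Longrightarrow> (x::'a) * x = x"
  using filter_in_idems unfolding idems_def by blast

lemma filter_upward: "is_filter F \<Longrightarrow> x \<in> F \<Longrightarrow> y \<in> idems \<Longrightarrow> idem_le x y \<Longrightarrow> (y::'a) \<in> F"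
  unfolding is_filter_def by blast

lemma filter_mult: "is_filter F \<Longrightarrow> x \<in> F \<Longrightarrow> y \<in> F \<Longrightarrow> (x::'a) * y \<in> F"
  unfolding is_filter_def by blast

lemma zero_notin_filter: "is_filter F \<Longrightarrow> (0::'a) \<notin> F"
proof
  assume F: "is_filter F" and z: "0 \<in> F"
  have "idems \<subseteq> F"
  proof
    fix y :: 'a assume "y \<in> idems"
    then show "y \<in> F" using filter_upward[OF F z] unfolding idem_le_def by simp
  qed
  with F show False unfolding is_filter_def by blast
qed

lemma filter_nonzero: "is_filter F \<Longrightarrow> x \<in> F \<Longrightarrow> (x::'a) \<noteq> 0"
  using zero_notin_filter by blast

lemma filter_mult_memD1: "is_filter F \<Longrightarrow> x * y \<in> F \<Longrightarrow> x \<in> idems \<Longrightarrow> y \<in> idems \<Longrightarrow> (x::'a) \<in> F"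
  using filter_upward[of F "x*y" x] idem_le_mult1[of x y] unfolding idems_def by blast

lemma filter_mult_memD2: "is_filter F \<Longrightarrow> x * y \<in> F \<Longrightarrow> x \<in> idems \<Longrightarrow> y \<in> idems \<Longrightarrow> (y::'a) \<in> F"
  using filter_upward[of F "x*y" y] idem_le_mult2[of x y] unfolding idems_def by blast

subsection \<open>The action of S on filters\<close>

text \<open>The up-closure of s \<xi> (sinv s); it is the action of s on filters containing sinv s * s.\<close>

definition theta :: "'a \<Rightarrow> 'a set \<Rightarrow> 'a set" where
  "theta s \<xi> = {y \<in> idems. \<exists>x\<in>\<xi>. idem_le (s * x * sinv s) y}"

lemma theta_mem: "is_filter \<xi> \<Longrightarrow> x \<in> \<xi> \<Longrightarrow> s * x * sinv s \<in> theta s \<xi>"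
  unfolding theta_def using conj_idem[OF filter_idem] idem_le_refl idems_def by blast

lemma theta_memI: "y \<in> idems \<Longrightarrow> x \<in> \<xi> \<Longrightarrow> idem_le (s * x * sinv s) y \<Longrightarrow> y \<in> theta s \<xi>"
  unfolding theta_def by blast

lemma theta_mono: "\<xi> \<subseteq> \<xi>' \<Longrightarrow> theta s \<xi> \<subseteq> theta s \<xi>'"
  unfolding theta_def by blast

lemma theta_mult_closed:
  assumes F: "is_filter \<xi>" and y1: "y1 \<in> theta s \<xi>" and y2: "y2 \<in> theta s \<xi>"
  shows "y1 * y2 \<in> theta s \<xi>"
proof -
  obtain x1 x2 where x1: "x1 \<in> \<xi>" "idem_le (s * x1 * sinv s) y1"
    and x2: "x2 \<in> \<xi>" "idem_le (s * x2 * sinv s) y2" using y1 y2 unfolding theta_def by blast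
  have i1: "y1 * y1 = y1" and i2: "y2 * y2 = y2" using y1 y2 unfolding theta_def idems_def by blast+
  define p where "p = s * x1 * sinv s"
  define q where "q = s * x2 * sinv s"
  have qi: "q * q = q" unfolding q_def using conj_idem[OF filter_idem[OF F x2(1)]] .
  have py: "p * y1 = p" using x1(2) unfolding p_def idem_le_def .
  have qy: "q * y2 = q" using x2(2) unfolding q_def idem_le_def .
  have pq: "p * q = s * (x1 * x2) * sinv s"
    unfolding p_def q_def by (rule conj_mult[OF filter_idem[OF F x2(1)]])
  have "p * q * (y1 * y2) = p * (q * y1) * y2" by (simp add: mult.assoc)
  also have "\<dots> = (p * y1) * (q * y2)" using idems_commute[OF qi i1] by (simp add: mult.assoc)
  finally have "idem_le (p * q) (y1 * y2)" unfolding idem_le_def using py qy by simp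
  moreover have "y1 * y2 \<in> idems" using i1 i2 idems_mult idems_def by blast
  moreover have "x1 * x2 \<in> \<xi>" using filter_mult[OF F x1(1) x2(1)] .
  ultimately show ?thesis unfolding theta_def pq by blast
qed

lemma theta_filter:
  assumes F: "is_filter \<xi>" and e: "sinv s * s \<in> \<xi>"
  shows "is_filter (theta s \<xi>)"
proof -
  have sub: "theta s \<xi> \<subseteq> idems" unfolding theta_def by blast
  have ne: "s * sinv s \<in> theta s \<xi>"
    using theta_mem[OF F e, of s] by (simp add: mult.assoc sinv_absorb(3) sinv_absorb(1))
  have nz: "0 \<notin> theta s \<xi>"
  proof
    assume "0 \<in> theta s \<xi>"
    then obtain x where x: "x \<in> \<xi>" and le: "idem_le (s * x * sinv s) 0" unfolding theta_def by blast
    have z: "s * x * sinv s = 0" using le unfolding idem_le_def by simp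
    have "sinv s * (s * x * sinv s) * s = x * (sinv s * s)" by (rule sinv_conj_conj[OF filter_idem[OF F x]])
    hence "x * (sinv s * s) = 0" using z by simp
    moreover have "x * (sinv s * s) \<in> \<xi>" using filter_mult[OF F x e] .
    ultimately show False using zero_notin_filter[OF F] by simp
  qed
  have up: "\<forall>x\<in>theta s \<xi>. \<forall>y\<in>idems. idem_le x y \<longrightarrow> y \<in> theta s \<xi>"
    unfolding theta_def using idem_le_trans by blast
  have meet: "\<forall>x\<in>theta s \<xi>. \<forall>y\<in>theta s \<xi>. x * y \<in> theta s \<xi>"
    using theta_mult_closed[OF F] by blast
  show ?thesis unfolding is_filter_def using sub ne nz up meet zero_in_idems by blast
qed

lemma range_in_theta: "is_filter \<xi> \<Longrightarrow> sinv s * s \<in> \<xi> \<Longrightarrow> s * sinv s \<in> theta s \<xi>"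
  using theta_mem[of \<xi> "sinv s * s" s] by (simp add: mult.assoc sinv_absorb(3) sinv_absorb(1))

lemma theta_sinv_theta:
  assumes F: "is_filter \<xi>" and e: "sinv s * s \<in> \<xi>"
  shows "theta (sinv s) (theta s \<xi>) = \<xi>"
proof
  show "theta (sinv s) (theta s \<xi>) \<subseteq> \<xi>"
  proof
    fix y assume "y \<in> theta (sinv s) (theta s \<xi>)"
    then obtain z where y: "y \<in> idems" and z: "z \<in> theta s \<xi>" and le: "idem_le (sinv s * z * s) y"
      unfolding theta_def by auto
    obtain x where x: "x \<in> \<xi>" and zi: "z \<in> idems" and le2: "idem_le (s * x * sinv s) z"
      using z unfolding theta_def by blast
    have xi: "x * x = x" using filter_idem[OF F x] .
    have "idem_le (sinv s * (s * x * sinv s) * sinv (sinv s)) (sinv s * z * sinv (sinv s))"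
      by (rule conj_mono[OF conj_idem[OF xi] _ le2]) (use zi in \<open>simp add: idems_def\<close>)
    hence "idem_le (x * (sinv s * s)) (sinv s * z * s)" using sinv_conj_conj[OF xi, of s] by simp
    hence "idem_le (x * (sinv s * s)) y" using le idem_le_trans by blast
    thus "y \<in> \<xi>" using filter_upward[OF F filter_mult[OF F x e] y] by blast
  qed
next
  show "\<xi> \<subseteq> theta (sinv s) (theta s \<xi>)"
  proof
    fix y assume y: "y \<in> \<xi>"
    have yi: "y * y = y" using filter_idem[OF F y] .
    have m: "s * y * sinv s \<in> theta s \<xi>" by (rule theta_mem[OF F y])
    have "sinv s * (s * y * sinv s) * s = y * (sinv s * s)" by (rule sinv_conj_conj[OF yi])
    moreover have "idem_le (y * (sinv s * s)) y" by (rule idem_le_mult1[OF yi domain_idem])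
    ultimately have "idem_le (sinv s * (s * y * sinv s) * sinv (sinv s)) y" by simp
    thus "y \<in> theta (sinv s) (theta s \<xi>)" by (rule theta_memI[OF filter_in_idems[OF F y] m])
  qed
qed

lemma theta_theta_sinv:
  assumes F: "is_filter \<xi>" and e: "s * sinv s \<in> \<xi>"
  shows "theta s (theta (sinv s) \<xi>) = \<xi>"
  using theta_sinv_theta[of \<xi> "sinv s"] assms by simp

lemma theta_ultrafilter:
  assumes U: "\<xi> \<in> ultrafilters" and e: "sinv s * s \<in> \<xi>"
  shows "theta s \<xi> \<in> ultrafilters"
proof -
  have F: "is_filter \<xi>" using U unfolding ultrafilters_def filters_def by blast
  have Ft: "is_filter (theta s \<xi>)" by (rule theta_filter[OF F e])
  have "\<forall>F'\<in>filters. theta s \<xi> \<subseteq> F' \<longrightarrow> F' = theta s \<xi>"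
  proof (intro ballI impI)
    fix F' assume F': "F' \<in> filters" and sub: "theta s \<xi> \<subseteq> F'"
    have F'f: "is_filter F'" using F' unfolding filters_def by blast
    have e': "s * sinv s \<in> F'" using range_in_theta[OF F e] sub by blast
    have e'': "sinv (sinv s) * sinv s \<in> F'" using e' by simp
    have "theta (sinv s) (theta s \<xi>) \<subseteq> theta (sinv s) F'" by (rule theta_mono[OF sub])
    hence "\<xi> \<subseteq> theta (sinv s) F'" using theta_sinv_theta[OF F e] by simp
    moreover have "theta (sinv s) F' \<in> filters" using theta_filter[OF F'f e''] unfolding filters_def by blast
    ultimately have "theta (sinv s) F' = \<xi>" using U unfolding ultrafilters_def by blast
    hence "theta s (theta (sinv s) F') = theta s \<xi>" by simp
    thus "F' = theta s \<xi>" using theta_theta_sinv[OF F'f e'] by simp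
  qed
  thus ?thesis unfolding ultrafilters_def filters_def using Ft by blast
qed

subsection \<open>The tight spectrum\<close>

definition filter_subbasis :: "'a set set set" where
  "filter_subbasis = {filters} \<union> (\<lambda>x. {F \<in> filters. x \<in> F}) ` idems \<union> (\<lambda>x. {F \<in> filters. x \<notin> F}) ` idems"

lemma filter_top_eq: "filter_top = topology_generated_by filter_subbasis"
  unfolding filter_top_def filter_subbasis_def ..

lemma topspace_filter_top: "topspace filter_top = (filters :: 'a set set)"
proof -
  have 1: "\<Union>filter_subbasis \<subseteq> filters" unfolding filter_subbasis_def by blast
  have 2: "filters \<subseteq> \<Union>filter_subbasis" unfolding filter_subbasis_def by blast
  from 1 2 have "\<Union>filter_subbasis = filters" by (rule antisym)
  thus ?thesis using topology_generated_by_topspace[of filter_subbasis] filter_top_eq by simp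
qed

lemma tight_filters_subset: "tight_filters \<subseteq> (filters :: 'a set set)"
proof -
  have "filter_top closure_of ultrafilters \<subseteq> topspace (filter_top :: 'a set topology)"
    by (rule closure_of_subset_topspace)
  thus ?thesis unfolding tight_filters_def topspace_filter_top .
qed

lemma tight_filter_is_filter: "(\<xi>::'a set) \<in> tight_filters \<Longrightarrow> is_filter \<xi>"
proof -
  assume "\<xi> \<in> tight_filters"
  hence "\<xi> \<in> filters" using tight_filters_subset by (rule subsetD[rotated])
  thus ?thesis unfolding filters_def by simp
qed

lemma topspace_tight_top: "topspace tight_top = (tight_filters :: 'a set set)"
proof -
  have "topspace tight_top = topspace filter_top \<inter> (tight_filters :: 'a set set)"
    unfolding tight_top_def by simp
  thus ?thesis using tight_filters_subset topspace_filter_top by blast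
qed

definition box :: "'a \<Rightarrow> 'a set \<Rightarrow> 'a set set" where
  "box x N = {F \<in> filters. x \<in> F \<and> N \<inter> F = {}}"

lemma box_open:
  assumes x: "x \<in> idems" and N: "finite N" "N \<subseteq> idems"
  shows "openin filter_top (box x N)"
  using N
proof (induction N rule: finite_induct)
  case empty
  have "box x {} = {F \<in> filters. x \<in> F}" unfolding box_def by auto
  moreover have "{F \<in> filters. x \<in> F} \<in> filter_subbasis" unfolding filter_subbasis_def using x by blast
  ultimately show ?case unfolding filter_top_eq by (simp add: topology_generated_by_Basis)
next
  case (insert y N)
  have "box x (insert y N) = box x N \<inter> {F \<in> filters. y \<notin> F}" unfolding box_def by auto
  moreover have "{F \<in> filters. y \<notin> F} \<in> filter_subbasis" unfolding filter_subbasis_def using insert by blast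
  ultimately show ?case using insert unfolding filter_top_eq
    by (simp add: topology_generated_by_Basis openin_Int)
qed

lemma box_mult_subset:
  assumes "x1 \<in> idems" "x2 \<in> idems"
  shows "box (x1 * x2) (N1 \<union> N2) \<subseteq> box x1 N1 \<inter> box x2 N2"
proof
  fix F assume "F \<in> box (x1 * x2) (N1 \<union> N2)"
  hence F: "is_filter F" "x1 * x2 \<in> F" "(N1 \<union> N2) \<inter> F = {}" unfolding box_def filters_def by auto
  have "x1 \<in> F" "x2 \<in> F" using filter_mult_memD1[OF F(1,2)] filter_mult_memD2[OF F(1,2)] assms by blast+
  thus "F \<in> box x1 N1 \<inter> box x2 N2" using F unfolding box_def filters_def by auto
qed

definition box_nbhd :: "'a set \<Rightarrow> 'a set set \<Rightarrow> bool" where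
  "box_nbhd \<eta> T \<longleftrightarrow> (\<exists>x\<in>\<eta>. \<exists>N. finite N \<and> N \<subseteq> idems \<and> N \<inter> \<eta> = {} \<and> box x N \<subseteq> T)"

lemma box_nbhd_Int:
  assumes F: "is_filter \<eta>" and "box_nbhd \<eta> A" "box_nbhd \<eta> B"
  shows "box_nbhd \<eta> (A \<inter> B)"
proof -
  obtain x1 N1 where 1: "x1 \<in> \<eta>" "finite N1" "N1 \<subseteq> idems" "N1 \<inter> \<eta> = {}" "box x1 N1 \<subseteq> A"
    using assms(2) unfolding box_nbhd_def by blast
  obtain x2 N2 where 2: "x2 \<in> \<eta>" "finite N2" "N2 \<subseteq> idems" "N2 \<inter> \<eta> = {}" "box x2 N2 \<subseteq> B"
    using assms(3) unfolding box_nbhd_def by blast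
  have "box (x1 * x2) (N1 \<union> N2) \<subseteq> A \<inter> B"
    using box_mult_subset[OF filter_in_idems[OF F 1(1)] filter_in_idems[OF F 2(1)]] 1(5) 2(5) by blast
  moreover have "x1 * x2 \<in> \<eta>" by (rule filter_mult[OF F 1(1) 2(1)])
  ultimately show ?thesis unfolding box_nbhd_def using 1 2 by (intro bexI[of _ "x1 * x2"] exI[of _ "N1 \<union> N2"]) auto
qed

lemma box_nbhd_subbasis:
  assumes S: "S \<in> filter_subbasis" and \<eta>: "\<eta> \<in> S" and F: "is_filter \<eta>"
  shows "box_nbhd \<eta> S"
proof -
  obtain x0 where x0: "x0 \<in> \<eta>" using F unfolding is_filter_def by blast
  from S consider "S = filters" | y where "y \<in> idems" "S = {F \<in> filters. y \<in> F}"
    | y where "y \<in> idems" "S = {F \<in> filters. y \<notin> F}" unfolding filter_subbasis_def by blast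
  thus ?thesis
  proof cases
    case 1
    thus ?thesis using x0 unfolding box_nbhd_def box_def by blast
  next
    case (2 y)
    hence "box y {} \<subseteq> S" "y \<in> \<eta>" using \<eta> unfolding box_def by auto
    thus ?thesis unfolding box_nbhd_def by blast
  next
    case (3 y)
    hence "box x0 {y} \<subseteq> S" "{y} \<inter> \<eta> = {}" using \<eta> unfolding box_def by auto
    thus ?thesis unfolding box_nbhd_def using x0 3 by blast
  qed
qed

lemma generated_open_box_nbhd:
  assumes "generate_topology_on filter_subbasis T"
  shows "\<eta> \<in> T \<Longrightarrow> is_filter \<eta> \<Longrightarrow> box_nbhd \<eta> (T::'a set set)"
  using assms
proof (induction arbitrary: \<eta> rule: generate_topology_on.induct)
  case (Int a b)
  thus ?case using box_nbhd_Int by blast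
next
  case (UN K)
  then obtain k where "k \<in> K" "\<eta> \<in> k" by blast
  thus ?case using UN.IH[OF \<open>k \<in> K\<close> \<open>\<eta> \<in> k\<close> UN.prems(2)] unfolding box_nbhd_def by blast
next
  case (Basis S)
  thus ?case using box_nbhd_subbasis by blast
qed simp

lemma open_contains_box:
  assumes "openin filter_top T" "\<eta> \<in> T"
  shows "\<exists>x\<in>\<eta>. \<exists>N. finite N \<and> N \<subseteq> idems \<and> N \<inter> \<eta> = {} \<and> box x N \<subseteq> T"
proof -
  have "is_filter \<eta>" using assms openin_subset topspace_filter_top unfolding filters_def by blast
  moreover have "generate_topology_on filter_subbasis T" using assms(1) unfolding filter_top_eq
    by (simp add: openin_topology_generated_by_iff)
  ultimately show ?thesis using generated_open_box_nbhd assms(2) unfolding box_nbhd_def by blast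
qed

lemma tight_filters_iff: "(\<xi>::'a set) \<in> tight_filters \<longleftrightarrow> \<xi> \<in> filters \<and> (\<forall>T. openin filter_top T \<and> \<xi> \<in> T \<longrightarrow> (\<exists>\<mu>\<in>ultrafilters. \<mu> \<in> T))"
  unfolding tight_filters_def in_closure_of topspace_filter_top by (simp add: Bex_def conj_commute)

lemma Vset_box: "Vset x Xs = box x Xs \<inter> tight_filters"
  unfolding Vset_def box_def using tight_filters_subset by (auto simp: disjoint_iff)

lemma Vset_open: "(x::'a) \<in> idems \<Longrightarrow> finite Xs \<Longrightarrow> Xs \<subseteq> idems \<Longrightarrow> openin tight_top (Vset x Xs)"
  unfolding tight_top_def openin_subtopology Vset_box by (rule exI[of _ "box x Xs"]) (simp add: box_open)

lemma Vset_restrict_subset_box: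
  assumes x0: "x0 \<in> idems" and e: "e \<in> idems"
  shows "Vset (x0 * e) ((\<lambda>y. y * (x0 * e)) ` N) \<subseteq> box x0 N"
proof
  fix \<zeta> assume "\<zeta> \<in> Vset (x0 * e) ((\<lambda>y. y * (x0 * e)) ` N)"
  hence T: "\<zeta> \<in> tight_filters" and xz: "x0 * e \<in> \<zeta>" and nz: "\<And>y. y \<in> N \<Longrightarrow> y * (x0 * e) \<notin> \<zeta>"
    unfolding Vset_def by auto
  have F: "is_filter \<zeta>" by (rule tight_filter_is_filter[OF T])
  have "x0 \<in> \<zeta>" using filter_mult_memD1[OF F xz x0 e] .
  moreover have "N \<inter> \<zeta> = {}" using filter_mult[OF F _ xz] nz by blast
  ultimately show "\<zeta> \<in> box x0 N" unfolding box_def filters_def using F by blast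
qed

definition Vrange :: "'a \<Rightarrow> 'a set set" where
  "Vrange s = Vset (s * sinv s) {}"

lemma Vrange_open: "openin tight_top (Vrange (s::'a))"
  unfolding Vrange_def by (rule Vset_open) (use range_idem idems_def in auto)

lemma Vrange_iff: "\<xi> \<in> Vrange s \<longleftrightarrow> \<xi> \<in> tight_filters \<and> (s::'a) * sinv s \<in> \<xi>"
  unfolding Vrange_def Vset_def by simp

lemma theta_preimage_box:
  assumes F: "is_filter \<xi>" and e: "sinv s * s \<in> \<xi>" and x: "x \<in> theta s \<xi>"
    and N: "N \<subseteq> idems" "N \<inter> theta s \<xi> = {}"
  shows "\<xi> \<in> box (sinv s * x * s) ((\<lambda>y. sinv s * y * s) ` N)"
proof -
  have Ft: "is_filter (theta s \<xi>)" by (rule theta_filter[OF F e])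
  have "sinv s * x * s \<in> \<xi>"
    using theta_mem[OF Ft x, of "sinv s"] theta_sinv_theta[OF F e] by simp
  moreover have "sinv s * y * s \<notin> \<xi>" if y: "y \<in> N" for y
  proof
    assume "sinv s * y * s \<in> \<xi>"
    have yy: "y * y = y" using y N(1) unfolding idems_def by blast
    have "s * (sinv s * y * s) * sinv s \<in> theta s \<xi>" by (rule theta_mem[OF F \<open>sinv s * y * s \<in> \<xi>\<close>])
    hence "y * (s * sinv s) \<in> theta s \<xi>" using conj_sinv_conj[OF yy] by simp
    hence "y \<in> theta s \<xi>" using filter_mult_memD1[OF Ft] yy range_idem y N(1) unfolding idems_def by blast
    thus False using N(2) y by blast
  qed
  ultimately show ?thesis unfolding box_def filters_def using F by blast
qed

lemma theta_box:
  assumes F: "is_filter \<mu>" and \<mu>: "\<mu> \<in> box (sinv s * x * s) ((\<lambda>y. sinv s * y * s) ` N)"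
    and x: "x \<in> idems"
  shows "sinv s * s \<in> \<mu>" and "theta s \<mu> \<in> box x N"
proof -
  have x1: "sinv s * x * s \<in> \<mu>" using \<mu> unfolding box_def by blast
  have xx: "x * x = x" using x unfolding idems_def by blast
  have "idem_le (sinv s * x * s) (sinv s * s)"
    unfolding idem_le_def by (simp add: mult.assoc sinv_absorb(3) sinv_absorb(1))
  thus e: "sinv s * s \<in> \<mu>" using filter_upward[OF F x1] domain_idem unfolding idems_def by blast
  have Ft: "is_filter (theta s \<mu>)" by (rule theta_filter[OF F e])
  have "s * (sinv s * x * s) * sinv s \<in> theta s \<mu>" by (rule theta_mem[OF F x1])
  hence "x * (s * sinv s) \<in> theta s \<mu>" using conj_sinv_conj[OF xx] by simp
  hence "x \<in> theta s \<mu>" using filter_mult_memD1[OF Ft] x range_idem unfolding idems_def by blast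
  moreover have "y \<notin> theta s \<mu>" if y: "y \<in> N" for y
  proof
    assume "y \<in> theta s \<mu>"
    hence "sinv s * y * sinv (sinv s) \<in> theta (sinv s) (theta s \<mu>)" by (rule theta_mem[OF Ft])
    hence "sinv s * y * s \<in> \<mu>" using theta_sinv_theta[OF F e] by simp
    thus False using \<mu> y unfolding box_def by blast
  qed
  ultimately show "theta s \<mu> \<in> box x N" unfolding box_def filters_def using Ft by blast
qed

lemma theta_tight:
  assumes T: "\<xi> \<in> tight_filters" and e: "sinv s * s \<in> \<xi>"
  shows "theta s \<xi> \<in> tight_filters"
proof -
  have F: "is_filter \<xi>" by (rule tight_filter_is_filter[OF T])
  have Ft: "is_filter (theta s \<xi>)" by (rule theta_filter[OF F e])
  have "\<exists>\<mu>\<in>ultrafilters. \<mu> \<in> W" if W: "openin filter_top W" "theta s \<xi> \<in> W" for W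
  proof -
    obtain x N where x: "x \<in> theta s \<xi>" and N: "finite N" "N \<subseteq> idems" "N \<inter> theta s \<xi> = {}"
      and bx: "box x N \<subseteq> W" using open_contains_box[OF W] by blast
    have xi: "x \<in> idems" using filter_in_idems[OF Ft x] .
    have "openin filter_top (box (sinv s * x * s) ((\<lambda>y. sinv s * y * s) ` N))"
      by (rule box_open) (use xi N conj_idem[of _ "sinv s"] in \<open>auto simp: idems_def\<close>)
    moreover have "\<xi> \<in> box (sinv s * x * s) ((\<lambda>y. sinv s * y * s) ` N)"
      by (rule theta_preimage_box[OF F e x N(2,3)])
    ultimately obtain \<mu> where \<mu>: "\<mu> \<in> ultrafilters" "\<mu> \<in> box (sinv s * x * s) ((\<lambda>y. sinv s * y * s) ` N)"
      using T tight_filters_iff by blast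
    have F\<mu>: "is_filter \<mu>" using \<mu>(1) unfolding ultrafilters_def filters_def by blast
    have "theta s \<mu> \<in> ultrafilters" by (rule theta_ultrafilter[OF \<mu>(1) theta_box(1)[OF F\<mu> \<mu>(2) xi]])
    thus ?thesis using theta_box(2)[OF F\<mu> \<mu>(2) xi] bx by blast
  qed
  thus ?thesis using tight_filters_iff Ft filters_def by blast
qed

end

section \<open>Pure gradings\<close>

definition deg_domain :: "('a::{semigroup_mult,mult_zero} \<Rightarrow> 'g) \<Rightarrow> 'g \<Rightarrow> 'a set set" where
  "deg_domain \<phi> g = {\<xi>. \<exists>s. s \<noteq> 0 \<and> \<phi> s = g \<and> s * sinv s \<in> \<xi>}"

locale pure_graded = inverse_semigroup_zero ty for ty :: "'a::{semigroup_mult,mult_zero} itself" +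
  fixes G :: "('g, 'b) monoid_scheme" and \<phi> :: "'a \<Rightarrow> 'g"
  assumes pg: "pure_grading G \<phi>"
begin

lemma group_G: "group G" using pg unfolding pure_grading_def by blast

sublocale group_G: group G by (rule group_G)

lemma phi_in_carrier: "(s::'a) \<noteq> 0 \<Longrightarrow> \<phi> s \<in> carrier G"
  using pg unfolding pure_grading_def by blast

lemma phi_mult: "(a::'a) * b \<noteq> 0 \<Longrightarrow> \<phi> (a * b) = \<phi> a \<otimes>\<^bsub>G\<^esub> \<phi> b"
  using pg unfolding pure_grading_def by (metis mult_zero_left mult_zero_right)

lemma phi_eq_one_iff: "(s::'a) \<noteq> 0 \<Longrightarrow> \<phi> s = \<one>\<^bsub>G\<^esub> \<longleftrightarrow> s * s = s"
proof -
  assume s: "s \<noteq> 0"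
  have "{s. s \<noteq> 0 \<and> \<phi> s = \<one>\<^bsub>G\<^esub>} = idems - {0::'a}" using pg unfolding pure_grading_def by blast
  hence "s \<in> {s. s \<noteq> 0 \<and> \<phi> s = \<one>\<^bsub>G\<^esub>} \<longleftrightarrow> s \<in> idems - {0}" by simp
  thus ?thesis using s unfolding idems_def by simp
qed

lemma phi_sinv: "(s::'a) \<noteq> 0 \<Longrightarrow> \<phi> (sinv s) = inv\<^bsub>G\<^esub> (\<phi> s)"
proof -
  assume s: "s \<noteq> 0"
  have nz: "sinv s * s \<noteq> 0" using s sinv_absorb(1)[of s] by (metis mult_zero_right)
  have "\<phi> (sinv s * s) = \<one>\<^bsub>G\<^esub>" using phi_eq_one_iff[OF nz] domain_idem by simp
  hence "\<phi> (sinv s) \<otimes>\<^bsub>G\<^esub> \<phi> s = \<one>\<^bsub>G\<^esub>" using phi_mult[OF nz] by simp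
  thus ?thesis using group_G.inv_equality phi_in_carrier s sinv_nonzero by metis
qed

lemma same_degree_agree:
  assumes st: "\<phi> s = \<phi> t" and x0: "(x::'a) \<noteq> 0" and xx: "x * x = x"
    and xs: "idem_le x (sinv s * s)" and xt: "idem_le x (sinv t * t)"
  shows "s * x = t * x"
proof -
  have xs': "(sinv s * s) * x = x" using xs idems_commute[OF xx domain_idem] unfolding idem_le_def by simp
  have xt': "(sinv t * t) * x = x" using xt idems_commute[OF xx domain_idem] unfolding idem_le_def by simp
  define p where "p = s * x"
  define q where "q = t * x"
  define f where "f = s * x * sinv t"
  have p0: "p \<noteq> 0" unfolding p_def using xs' x0 by (metis mult.assoc mult_zero_right)
  have fq: "f * q = p" unfolding f_def q_def p_def using xt' xx by (simp add: mult.assoc)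
  have f0: "f \<noteq> 0" using fq p0 by auto
  have s0: "s \<noteq> 0" using p0 unfolding p_def by auto
  have t0: "t \<noteq> 0" using f0 unfolding f_def by auto
  have sx0: "s * x \<noteq> 0" using p0 p_def by simp
  have x1: "\<phi> x = \<one>\<^bsub>G\<^esub>" using phi_eq_one_iff[OF x0] xx by simp
  have "\<phi> f = \<phi> (s * x) \<otimes>\<^bsub>G\<^esub> \<phi> (sinv t)" unfolding f_def using f0 f_def phi_mult by blast
  also have "\<dots> = \<phi> s \<otimes>\<^bsub>G\<^esub> inv\<^bsub>G\<^esub> (\<phi> t)" using phi_mult[OF sx0] x1 phi_sinv[OF t0] phi_in_carrier[OF s0] by simp
  also have "\<dots> = \<one>\<^bsub>G\<^esub>" using st phi_in_carrier[OF t0] by simp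
  finally have ff: "f * f = f" using phi_eq_one_iff[OF f0] by simp
  have sf: "sinv f = t * x * sinv s" unfolding f_def using xx by (simp add: sinv_mult sinv_idem mult.assoc)
  have sff: "sinv f = f" using sinv_idem[OF ff] by simp
  have "f * p = (t * x * sinv s) * (s * x)" using sf sff unfolding p_def by simp
  also have "\<dots> = t * x * ((sinv s * s) * x)" by (simp add: mult.assoc)
  also have "\<dots> = t * (x * x)" using xs' by (simp add: mult.assoc)
  finally have fp: "f * p = q" unfolding q_def using xx by simp
  have "p = f * q" using fq by simp
  also have "\<dots> = f * (f * p)" using fp by simp
  also have "\<dots> = f * p" using ff by (simp add: mult.assoc[symmetric])
  also have "\<dots> = q" by (rule fp)
  finally show ?thesis unfolding p_def q_def .
qed

lemma theta_subset_same_degree: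
  assumes F: "is_filter \<xi>" and st: "\<phi> s = \<phi> t"
    and es: "sinv s * s \<in> \<xi>" and et: "sinv t * t \<in> \<xi>" and y: "y \<in> theta s \<xi>"
  shows "y \<in> theta t \<xi>"
proof -
  obtain x where yi: "y \<in> idems" and x: "x \<in> \<xi>" and le: "idem_le (s * x * sinv s) y"
    using y unfolding theta_def by blast
  define e1 where "e1 = sinv s * s"
  define e2 where "e2 = sinv t * t"
  have e1i: "e1 * e1 = e1" and e2i: "e2 * e2 = e2" unfolding e1_def e2_def using domain_idem by auto
  have xx: "x * x = x" by (rule filter_idem[OF F x])
  define x' where "x' = x * (e1 * e2)"
  have x'm: "x' \<in> \<xi>" unfolding x'_def e1_def e2_def using F x es et by (simp add: filter_mult)
  have x'0: "x' \<noteq> 0" using filter_nonzero[OF F x'm] .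
  have e12: "(e1 * e2) * (e1 * e2) = e1 * e2" by (rule idem_mult_closed[OF e1i e2i])
  have x'x': "x' * x' = x'" unfolding x'_def by (rule idem_mult_closed[OF xx e12])
  have c21: "e2 * e1 = e1 * e2" by (rule idems_commute[OF e2i e1i])
  have "x * (e1 * e2) * e1 = x * (e1 * (e2 * e1))" by (simp add: mult.assoc)
  also have "\<dots> = x * (e1 * e1 * e2)" using c21 by (simp add: mult.assoc)
  also have "\<dots> = x * (e1 * e2)" using e1i by simp
  finally have le1: "idem_le x' e1" unfolding x'_def idem_le_def .
  have le2: "idem_le x' e2" unfolding x'_def idem_le_def by (simp add: mult.assoc e2i)
  have lex: "idem_le x' x" unfolding x'_def by (rule idem_le_mult1[OF xx e12])
  have eq: "s * x' = t * x'" by (rule same_degree_agree[OF st x'0 x'x' le1[unfolded e1_def] le2[unfolded e2_def]])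
  have "t * x' * sinv t = s * x' * sinv s" using conj_eq[OF eq x'x'] by simp
  moreover have "idem_le (s * x' * sinv s) (s * x * sinv s)" by (rule conj_mono[OF x'x' xx lex])
  ultimately have "idem_le (t * x' * sinv t) y" using le idem_le_trans by simp
  thus ?thesis using yi x'm theta_memI by blast
qed

lemma theta_eq_same_degree:
  assumes F: "is_filter \<xi>" and st: "\<phi> s = \<phi> t"
    and es: "sinv s * s \<in> \<xi>" and et: "sinv t * t \<in> \<xi>"
  shows "theta s \<xi> = theta t \<xi>"
  using theta_subset_same_degree[OF F st es et] theta_subset_same_degree[OF F st[symmetric] et es] by blast

text \<open>The action of k \<in> G: theta u for any u of degree k with sinv u * u \<in> \<xi>, independent of the choice
  by theta_eq_same_degree.\<close>

definition theta_deg :: "'g \<Rightarrow> 'a set \<Rightarrow> 'a set" where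
  "theta_deg k \<xi> = theta (SOME u. u \<noteq> 0 \<and> \<phi> u = k \<and> sinv u * u \<in> \<xi>) \<xi>"

lemma theta_deg_eq:
  assumes F: "is_filter \<xi>" and u: "\<phi> u = k" "sinv u * u \<in> \<xi>"
  shows "theta_deg k \<xi> = theta u \<xi>"
proof -
  have u0: "u \<noteq> 0"
  proof
    assume "u = 0" hence "0 \<in> \<xi>" using u(2) by simp
    thus False using zero_notin_filter[OF F] by simp
  qed
  have ex: "\<exists>u. u \<noteq> 0 \<and> \<phi> u = k \<and> sinv u * u \<in> \<xi>" using u u0 by blast
  define v where "v = (SOME u. u \<noteq> 0 \<and> \<phi> u = k \<and> sinv u * u \<in> \<xi>)"
  have v: "v \<noteq> 0 \<and> \<phi> v = k \<and> sinv v * v \<in> \<xi>" unfolding v_def by (rule someI_ex[OF ex])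
  have "theta_deg k \<xi> = theta v \<xi>" unfolding theta_deg_def v_def ..
  also have "\<dots> = theta u \<xi>"
  proof (rule theta_eq_same_degree[OF F _ _ u(2)])
    show "\<phi> v = \<phi> u" using v u(1) by simp
    show "sinv v * v \<in> \<xi>" using v by simp
  qed
  finally show ?thesis .
qed

lemma phig_zero: "phig \<phi> g (0::'a) = 0"
  unfolding phig_def Let_def by simp

lemma phig_idem: "(x::'a) * x = x \<Longrightarrow> phig \<phi> g x * phig \<phi> g x = phig \<phi> g x"
  unfolding phig_def Let_def by (rule conj_idem)

lemma phig_eq:
  assumes x0: "(x::'a) \<noteq> 0" and xx: "x * x = x" and s: "\<phi> s = g" "idem_le x (sinv s * s)"
  shows "phig \<phi> g x = s * x * sinv s"
proof -
  have s0: "s \<noteq> 0" using s(2) x0 unfolding idem_le_def by auto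
  have ex: "\<exists>t. t \<noteq> 0 \<and> \<phi> t = g \<and> idem_le x (sinv t * t)" using s s0 by blast
  define t where "t = (SOME t. t \<noteq> 0 \<and> \<phi> t = g \<and> idem_le x (sinv t * t))"
  have t: "t \<noteq> 0 \<and> \<phi> t = g \<and> idem_le x (sinv t * t)" unfolding t_def by (rule someI_ex[OF ex])
  have "phig \<phi> g x = t * x * sinv t" unfolding phig_def Let_def t_def ..
  also have "\<dots> = s * x * sinv s"
  proof (rule conj_eq[OF _ xx])
    show "t * x = s * x" by (rule same_degree_agree) (use t s x0 xx in auto)
  qed
  finally show ?thesis .
qed

lemma Eg_idems: "Eg \<phi> g \<subseteq> idems"
  unfolding Eg_def by auto

lemma Eg_nonzeroD:
  assumes "x \<in> Eg \<phi> g" "(x::'a) \<noteq> 0"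
  shows "x \<in> idems \<and> (\<exists>s. s \<noteq> 0 \<and> \<phi> s = g \<and> idem_le x (s * sinv s))"
  using assms unfolding Eg_def by (auto split: if_splits)

lemma Eg_memI:
  assumes "(x::'a) \<in> idems" "s \<noteq> 0" "\<phi> s = g" "idem_le x (s * sinv s)"
  shows "x \<in> Eg \<phi> g"
  using assms unfolding Eg_def by auto

lemma hatphi_open: "openin tight_top (hatphi G \<phi> g U)"
proof -
  have "openin tight_top (Vset (phig \<phi> g x) (phig \<phi> g ` Xs))"
    if "x \<in> Eg \<phi> (inv\<^bsub>G\<^esub> g)" "finite Xs" "Xs \<subseteq> Eg \<phi> (inv\<^bsub>G\<^esub> g)" for x Xs
  proof (rule Vset_open)
    show "phig \<phi> g x \<in> idems" using that Eg_idems phig_idem unfolding idems_def by blast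
    show "finite (phig \<phi> g ` Xs)" using that by simp
    show "phig \<phi> g ` Xs \<subseteq> idems" using that Eg_idems phig_idem unfolding idems_def by blast
  qed
  thus ?thesis unfolding hatphi_def by (intro openin_Union) blast
qed

lemma theta_deg_props:
  assumes k: "k \<in> carrier G" and T: "\<xi> \<in> tight_filters" and D: "\<xi> \<in> deg_domain \<phi> k"
  shows "theta_deg (inv\<^bsub>G\<^esub> k) \<xi> \<in> tight_filters"
    "theta_deg (inv\<^bsub>G\<^esub> k) \<xi> \<in> deg_domain \<phi> (inv\<^bsub>G\<^esub> k)"
    "theta_deg k (theta_deg (inv\<^bsub>G\<^esub> k) \<xi>) = \<xi>"
proof -
  have F: "is_filter \<xi>" by (rule tight_filter_is_filter[OF T])
  obtain s where s: "s \<noteq> 0" "\<phi> s = k" "s * sinv s \<in> \<xi>" using D unfolding deg_domain_def by blast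
  have ssm': "sinv (sinv s) * sinv s \<in> \<xi>" using s(3) by simp
  have th: "theta_deg (inv\<^bsub>G\<^esub> k) \<xi> = theta (sinv s) \<xi>"
    by (rule theta_deg_eq[OF F _ ssm']) (use phi_sinv[OF s(1)] s(2) in simp)
  show "theta_deg (inv\<^bsub>G\<^esub> k) \<xi> \<in> tight_filters" unfolding th by (rule theta_tight[OF T ssm'])
  have eF: "is_filter (theta (sinv s) \<xi>)" by (rule theta_filter[OF F ssm'])
  have ee: "sinv s * s \<in> theta (sinv s) \<xi>" using range_in_theta[OF F ssm'] by simp
  show "theta_deg (inv\<^bsub>G\<^esub> k) \<xi> \<in> deg_domain \<phi> (inv\<^bsub>G\<^esub> k)" unfolding th deg_domain_def
    using sinv_nonzero[OF s(1)] phi_sinv[OF s(1)] s(2) ee by (intro CollectI exI[of _ "sinv s"]) simp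
  have "theta_deg k (theta (sinv s) \<xi>) = theta s (theta (sinv s) \<xi>)" by (rule theta_deg_eq[OF eF s(2) ee])
  also have "\<dots> = \<xi>" by (rule theta_theta_sinv[OF F s(3)])
  finally show "theta_deg k (theta_deg (inv\<^bsub>G\<^esub> k) \<xi>) = \<xi>" unfolding th .
qed

lemma Eg_inv_domain:
  assumes "s \<noteq> 0" "\<phi> s = g" "(z::'a) * z = z" "idem_le z (sinv s * s)"
  shows "z \<in> Eg \<phi> (inv\<^bsub>G\<^esub> g)"
  by (rule Eg_memI[OF _ sinv_nonzero[OF assms(1)]]) (use assms phi_sinv idems_def in auto)

lemma Eg_inv_sinv:
  assumes g: "g \<in> carrier G" and y: "y \<in> Eg \<phi> (inv\<^bsub>G\<^esub> g)" "y \<noteq> 0"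
  obtains t where "t \<noteq> 0" "\<phi> t = g" "y * y = y" "idem_le y (sinv t * t)"
    "phig \<phi> g y = t * y * sinv t"
proof -
  obtain s where yi: "y \<in> idems" and s: "s \<noteq> 0" "\<phi> s = inv\<^bsub>G\<^esub> g" "idem_le y (s * sinv s)"
    using Eg_nonzeroD[OF y] by blast
  have yy: "y * y = y" using yi unfolding idems_def by blast
  have tg: "\<phi> (sinv s) = g" using phi_sinv[OF s(1)] s(2) g by simp
  have yt: "idem_le y (sinv (sinv s) * sinv s)" using s(3) by simp
  show thesis by (rule that[OF sinv_nonzero[OF s(1)] tg yy yt phig_eq[OF y(2) yy tg yt]])
qed

lemma phig_mem_deg_domain:
  assumes g: "g \<in> carrier G" and F: "is_filter \<xi>"
    and y: "y \<in> Eg \<phi> (inv\<^bsub>G\<^esub> g)" and m: "phig \<phi> g y \<in> \<xi>"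
  shows "\<xi> \<in> deg_domain \<phi> g"
proof -
  have "y \<noteq> 0" using m phig_zero zero_notin_filter[OF F] by metis
  then obtain t where t: "t \<noteq> 0" "\<phi> t = g" "y * y = y" "phig \<phi> g y = t * y * sinv t"
    using Eg_inv_sinv[OF g y] by metis
  have "t * sinv t \<in> \<xi>"
    using filter_upward[OF F m[unfolded t(4)] _ conj_le_range[OF t(3)]] range_idem
    unfolding idems_def by blast
  thus ?thesis unfolding deg_domain_def using t by blast
qed

text \<open>This identifies hatphi g with the action of g on tight filters.\<close>

lemma phig_mem_iff:
  assumes g: "g \<in> carrier G" and F: "is_filter \<xi>" and D: "\<xi> \<in> deg_domain \<phi> g"
    and y: "y \<in> Eg \<phi> (inv\<^bsub>G\<^esub> g)" "y \<noteq> 0"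
  shows "phig \<phi> g y \<in> \<xi> \<longleftrightarrow> y \<in> theta_deg (inv\<^bsub>G\<^esub> g) \<xi>"
proof -
  obtain t where t0: "t \<noteq> 0" and tg: "\<phi> t = g" and yy: "y * y = y"
    and yt: "idem_le y (sinv t * t)" and phig_y: "phig \<phi> g y = t * y * sinv t"
    using Eg_inv_sinv[OF g y] by metis
  show ?thesis
  proof
    assume "phig \<phi> g y \<in> \<xi>"
    hence m: "t * y * sinv t \<in> \<xi>" using phig_y by simp
    have "t * sinv t \<in> \<xi>"
      using filter_upward[OF F m _ conj_le_range[OF yy]] range_idem unfolding idems_def by blast
    hence "theta_deg (inv\<^bsub>G\<^esub> g) \<xi> = theta (sinv t) \<xi>"
      by (intro theta_deg_eq[OF F]) (use phi_sinv[OF t0] tg in simp_all)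
    moreover have "sinv t * (t * y * sinv t) * sinv (sinv t) \<in> theta (sinv t) \<xi>"
      by (rule theta_mem[OF F m])
    ultimately show "y \<in> theta_deg (inv\<^bsub>G\<^esub> g) \<xi>"
      using sinv_conj_conj[OF yy, of t] yt unfolding idem_le_def by simp
  next
    assume yth: "y \<in> theta_deg (inv\<^bsub>G\<^esub> g) \<xi>"
    obtain s where s: "s \<noteq> 0" "\<phi> s = g" "s * sinv s \<in> \<xi>" using D unfolding deg_domain_def by blast
    have ssm': "sinv (sinv s) * sinv s \<in> \<xi>" using s(3) by simp
    define \<eta> where "\<eta> = theta (sinv s) \<xi>"
    have "theta_deg (inv\<^bsub>G\<^esub> g) \<xi> = \<eta>" unfolding \<eta>_def
      by (rule theta_deg_eq[OF F _ ssm']) (use phi_sinv[OF s(1)] s(2) in simp)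
    hence y\<eta>: "y \<in> \<eta>" using yth by simp
    have \<eta>F: "is_filter \<eta>" unfolding \<eta>_def by (rule theta_filter[OF F ssm'])
    have d\<eta>: "sinv s * s \<in> \<eta>" unfolding \<eta>_def using range_in_theta[OF F ssm'] by simp
    \<comment> \<open>cut y down below the domain of s, where s and t act alike\<close>
    define y' where "y' = y * (sinv s * s)"
    have y'\<eta>: "y' \<in> \<eta>" unfolding y'_def by (rule filter_mult[OF \<eta>F y\<eta> d\<eta>])
    have y'y': "y' * y' = y'" unfolding y'_def by (rule idem_mult_closed[OF yy domain_idem])
    have y'le: "idem_le y' y" unfolding y'_def by (rule idem_le_mult1[OF yy domain_idem])
    have y's: "idem_le y' (sinv s * s)" unfolding y'_def by (rule idem_le_mult2[OF yy domain_idem])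
    have eq: "s * y' = t * y'"
      by (rule same_degree_agree)
        (use s(2) tg zero_notin_filter[OF \<eta>F] y'\<eta> y'y' y's idem_le_trans[OF y'le yt] in auto)
    have "s * y' * sinv s \<in> \<xi>"
      using theta_mem[OF \<eta>F y'\<eta>, of s] theta_theta_sinv[OF F s(3)] unfolding \<eta>_def by simp
    hence "t * y' * sinv t \<in> \<xi>" using conj_eq[OF eq y'y'] by simp
    moreover have "idem_le (t * y' * sinv t) (t * y * sinv t)" by (rule conj_mono[OF y'y' yy y'le])
    ultimately show "phig \<phi> g y \<in> \<xi>"
      unfolding phig_y using filter_upward[OF F] conj_idem[OF yy] unfolding idems_def by blast
  qed
qed

lemma mem_hatphiD:
  assumes g: "g \<in> carrier G" and m: "\<xi> \<in> hatphi G \<phi> g U"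
  shows "\<xi> \<in> tight_filters \<and> \<xi> \<in> deg_domain \<phi> g \<and> theta_deg (inv\<^bsub>G\<^esub> g) \<xi> \<in> U"
proof -
  obtain x Xs where x: "x \<in> Eg \<phi> (inv\<^bsub>G\<^esub> g)" and Xs: "finite Xs" "Xs \<subseteq> Eg \<phi> (inv\<^bsub>G\<^esub> g)"
    and VU: "Vset x Xs \<subseteq> U" and \<xi>V: "\<xi> \<in> Vset (phig \<phi> g x) (phig \<phi> g ` Xs)"
    using m unfolding hatphi_def by blast
  have T: "\<xi> \<in> tight_filters" and px: "phig \<phi> g x \<in> \<xi>"
    and py: "\<And>y. y \<in> Xs \<Longrightarrow> phig \<phi> g y \<notin> \<xi>"
    using \<xi>V unfolding Vset_def by auto
  have F: "is_filter \<xi>" by (rule tight_filter_is_filter[OF T])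
  have D: "\<xi> \<in> deg_domain \<phi> g" by (rule phig_mem_deg_domain[OF g F x px])
  define \<eta> where "\<eta> = theta_deg (inv\<^bsub>G\<^esub> g) \<xi>"
  have \<eta>F: "is_filter \<eta>" unfolding \<eta>_def by (rule tight_filter_is_filter[OF theta_deg_props(1)[OF g T D]])
  have "x \<noteq> 0" using px phig_zero zero_notin_filter[OF F] by metis
  hence "x \<in> \<eta>" using phig_mem_iff[OF g F D x] px unfolding \<eta>_def by blast
  moreover have "y \<notin> \<eta>" if "y \<in> Xs" for y
    using phig_mem_iff[OF g F D] py[OF that] that Xs(2) zero_notin_filter[OF \<eta>F]
    unfolding \<eta>_def by blast
  ultimately have "\<eta> \<in> Vset x Xs"
    unfolding Vset_def \<eta>_def using theta_deg_props(1)[OF g T D] by blast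
  thus ?thesis using VU T D unfolding \<eta>_def by blast
qed

lemma mem_hatphiI:
  assumes g: "g \<in> carrier G" and U: "openin tight_top U"
    and T: "\<xi> \<in> tight_filters" and D: "\<xi> \<in> deg_domain \<phi> g"
    and \<eta>U: "theta_deg (inv\<^bsub>G\<^esub> g) \<xi> \<in> U"
  shows "\<xi> \<in> hatphi G \<phi> g U"
proof -
  have F: "is_filter \<xi>" by (rule tight_filter_is_filter[OF T])
  obtain s where s: "s \<noteq> 0" "\<phi> s = g" "s * sinv s \<in> \<xi>" using D unfolding deg_domain_def by blast
  have ssm': "sinv (sinv s) * sinv s \<in> \<xi>" using s(3) by simp
  define \<eta> where "\<eta> = theta_deg (inv\<^bsub>G\<^esub> g) \<xi>"
  have th: "\<eta> = theta (sinv s) \<xi>" unfolding \<eta>_def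
    by (rule theta_deg_eq[OF F _ ssm']) (use phi_sinv[OF s(1)] s(2) in simp)
  have \<eta>F: "is_filter \<eta>" unfolding th by (rule theta_filter[OF F ssm'])
  obtain W where W: "openin filter_top W" "U = W \<inter> tight_filters"
    using U unfolding tight_top_def openin_subtopology by blast
  obtain x0 N where x0: "x0 \<in> \<eta>" and N: "finite N" "N \<subseteq> idems" "N \<inter> \<eta> = {}"
    and bx: "box x0 N \<subseteq> W"
    using open_contains_box[OF W(1)] \<eta>U W(2) unfolding \<eta>_def by blast
  have x0i: "x0 \<in> idems" using filter_in_idems[OF \<eta>F x0] .
  define e where "e = sinv s * s"
  have ei: "e * e = e" unfolding e_def by (rule domain_idem)
  have ee: "e \<in> \<eta>" unfolding th e_def using range_in_theta[OF F ssm'] by simp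
  \<comment> \<open>shrink the basic neighbourhood box x0 N into the domain of s\<close>
  define x where "x = x0 * e"
  define Xs where "Xs = (\<lambda>y. y * x) ` N"
  have x\<eta>: "x \<in> \<eta>" unfolding x_def by (rule filter_mult[OF \<eta>F x0 ee])
  have xx: "x * x = x" unfolding x_def using x0i ei idem_mult_closed unfolding idems_def by blast
  have xle: "idem_le x e" unfolding x_def using x0i ei idem_le_mult2 unfolding idems_def by blast
  have xE: "x \<in> Eg \<phi> (inv\<^bsub>G\<^esub> g)" using Eg_inv_domain[OF s(1,2) xx] xle unfolding e_def by blast
  have XsE: "Xs \<subseteq> Eg \<phi> (inv\<^bsub>G\<^esub> g)"
  proof
    fix z assume "z \<in> Xs"
    then obtain y where y: "y \<in> N" "z = y * x" unfolding Xs_def by blast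
    have yy: "y * y = y" using y(1) N(2) unfolding idems_def by blast
    show "z \<in> Eg \<phi> (inv\<^bsub>G\<^esub> g)" unfolding y(2) using Eg_inv_domain[OF s(1,2) idem_mult_closed[OF yy xx]]
      idem_le_trans[OF idem_le_mult2[OF yy xx] xle] unfolding e_def by blast
  qed
  have "Vset x Xs \<subseteq> box x0 N" unfolding x_def Xs_def
    by (rule Vset_restrict_subset_box[OF x0i]) (use ei idems_def in blast)
  hence VU: "Vset x Xs \<subseteq> U" using bx W unfolding Vset_def by blast
  have "x \<noteq> 0" using x\<eta> zero_notin_filter[OF \<eta>F] by blast
  hence "phig \<phi> g x \<in> \<xi>" using phig_mem_iff[OF g F D xE] x\<eta> unfolding \<eta>_def by blast
  moreover have "phig \<phi> g z \<notin> \<xi>" if z: "z \<in> Xs" for z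
  proof
    assume pz: "phig \<phi> g z \<in> \<xi>"
    obtain y where y: "y \<in> N" "z = y * x" using z unfolding Xs_def by blast
    have "z \<noteq> 0" using pz phig_zero zero_notin_filter[OF F] by metis
    hence "y * x \<in> \<eta>" using phig_mem_iff[OF g F D] pz z XsE y(2) unfolding \<eta>_def by blast
    hence "y \<in> \<eta>" using filter_mult_memD1[OF \<eta>F] y N(2) xx unfolding idems_def by blast
    thus False using y(1) N(3) by blast
  qed
  ultimately have "\<xi> \<in> Vset (phig \<phi> g x) (phig \<phi> g ` Xs)" unfolding Vset_def using T by blast
  thus ?thesis unfolding hatphi_def using xE XsE VU N(1) unfolding Xs_def by blast
qed

lemma mem_hatphi_iff:
  assumes "g \<in> carrier G" and "openin tight_top U"
  shows "\<xi> \<in> hatphi G \<phi> g U \<longleftrightarrow>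
    \<xi> \<in> tight_filters \<and> \<xi> \<in> deg_domain \<phi> g \<and> theta_deg (inv\<^bsub>G\<^esub> g) \<xi> \<in> U"
  using mem_hatphiD[OF assms(1)] mem_hatphiI[OF assms] by blast

lemma Tcg_subset: "U \<in> Tcg \<phi> g \<Longrightarrow> U \<subseteq> tight_filters \<inter> deg_domain \<phi> g"
proof
  fix \<xi> assume U: "U \<in> Tcg \<phi> g" and xi: "\<xi> \<in> U"
  then obtain x where x: "x \<in> Eg \<phi> g" "\<xi> \<in> Vset x {}" unfolding Tcg_def by blast
  hence T: "\<xi> \<in> tight_filters" and xm: "x \<in> \<xi>" unfolding Vset_def by auto
  have F: "is_filter \<xi>" by (rule tight_filter_is_filter[OF T])
  have x0: "x \<noteq> 0" using xm zero_notin_filter[OF F] by blast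
  obtain s where s: "s \<noteq> 0" "\<phi> s = g" "idem_le x (s * sinv s)" using Eg_nonzeroD[OF x(1) x0] by blast
  have "s * sinv s \<in> \<xi>" using filter_upward[OF F xm _ s(3)] range_idem unfolding idems_def by blast
  thus "\<xi> \<in> tight_filters \<inter> deg_domain \<phi> g" unfolding deg_domain_def using T s by blast
qed

lemma Tcg_open: "U \<in> Tcg \<phi> g \<Longrightarrow> openin tight_top U"
  unfolding Tcg_def Tc_def by blast

lemma skew_carrier_nonzeroD:
  assumes a: "a \<in> skew_carrier G \<phi>" and nz: "a g \<xi> \<noteq> 0"
  shows "g \<in> carrier G \<and> \<xi> \<in> tight_filters \<and> \<xi> \<in> deg_domain \<phi> g"
proof -
  have "a g \<noteq> (\<lambda>_. 0)" using nz by auto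
  hence g: "g \<in> carrier G" using a unfolding skew_carrier_def by blast
  hence "a g \<in> Lc (Tcg \<phi> g)" using a unfolding skew_carrier_def by blast
  hence "{\<eta>. a g \<eta> = a g \<xi>} \<in> Tcg \<phi> g" using nz unfolding Lc_def by blast
  hence "{\<eta>. a g \<eta> = a g \<xi>} \<subseteq> tight_filters \<inter> deg_domain \<phi> g" by (rule Tcg_subset)
  thus ?thesis using g by blast
qed

lemma skew_carrier_Lc:
  assumes a: "a \<in> skew_carrier G \<phi>" and g: "g \<in> carrier G"
  shows "finite (range (a g))" "\<And>r. r \<noteq> 0 \<Longrightarrow> {\<xi>. a g \<xi> = r} \<in> Tcg \<phi> g"
  using a g unfolding skew_carrier_def Lc_def by blast+

lemma skew_carrier_level_open:
  assumes a: "a \<in> skew_carrier G \<phi>" and r: "r \<noteq> 0"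
  shows "openin tight_top {\<xi>. a g \<xi> = r}"
proof (cases "g \<in> carrier G")
  case True
  thus ?thesis using skew_carrier_Lc(2)[OF a True r] Tcg_open by blast
next
  case False
  hence "{\<xi>. a g \<xi> = r} = {}" using skew_carrier_nonzeroD[OF a] r by fastforce
  thus ?thesis by simp
qed

lemma skew_carrier_support_compact:
  assumes a: "a \<in> skew_carrier G \<phi>" and g: "g \<in> carrier G"
  shows "compactin tight_top {\<xi>. a g \<xi> \<noteq> 0}"
proof -
  have "{\<xi>. a g \<xi> \<noteq> 0} = (\<Union>r \<in> range (a g) - {0}. {\<xi>. a g \<xi> = r})" by auto
  moreover have "compactin tight_top {\<xi>. a g \<xi> = r}" if "r \<noteq> 0" for r
    using skew_carrier_Lc(2)[OF a g that] unfolding Tcg_def Tc_def by blast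
  ultimately show ?thesis using skew_carrier_Lc(1)[OF a g] by (auto intro!: compactin_Union)
qed

lemma tildephi_eq:
  assumes k: "k \<in> carrier G" and fin: "finite (range h)"
    and lv: "\<And>r. r \<noteq> 0 \<Longrightarrow> openin tight_top {\<eta>. h \<eta> = r}"
  shows "tildephi G \<phi> k h \<xi> = (if \<xi> \<in> tight_filters \<and> \<xi> \<in> deg_domain \<phi> k then h (theta_deg (inv\<^bsub>G\<^esub> k) \<xi>) else 0)"
proof -
  define C where "C = (\<xi> \<in> tight_filters \<and> \<xi> \<in> deg_domain \<phi> k)"
  define R where "R = range h - {0}"
  have Rf: "finite R" unfolding R_def using fin by simp
  have mem: "\<xi> \<in> hatphi G \<phi> k {\<eta>. h \<eta> = r} \<longleftrightarrow> C \<and> h (theta_deg (inv\<^bsub>G\<^esub> k) \<xi>) = r" if "r \<in> R" for r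
    using mem_hatphi_iff[OF k lv] that unfolding R_def C_def by auto
  have "tildephi G \<phi> k h \<xi> = (\<Sum>r\<in>R. if C \<and> h (theta_deg (inv\<^bsub>G\<^esub> k) \<xi>) = r then r else 0)"
    unfolding tildephi_def R_def[symmetric] using mem by (intro sum.cong) auto
  also have "\<dots> = (if C then h (theta_deg (inv\<^bsub>G\<^esub> k) \<xi>) else 0)"
  proof (cases C)
    case True
    have "(\<Sum>r\<in>R. if C \<and> h (theta_deg (inv\<^bsub>G\<^esub> k) \<xi>) = r then r else 0)
        = (\<Sum>r\<in>R. if h (theta_deg (inv\<^bsub>G\<^esub> k) \<xi>) = r then r else 0)" using True by simp
    also have "\<dots> = (if h (theta_deg (inv\<^bsub>G\<^esub> k) \<xi>) \<in> R then h (theta_deg (inv\<^bsub>G\<^esub> k) \<xi>) else 0)"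
      using sum.delta'[OF Rf, of "h (theta_deg (inv\<^bsub>G\<^esub> k) \<xi>)" "\<lambda>r. r"] by simp
    also have "\<dots> = h (theta_deg (inv\<^bsub>G\<^esub> k) \<xi>)" unfolding R_def by auto
    finally show ?thesis using True by simp
  qed simp
  finally show ?thesis unfolding C_def .
qed

lemma finite_range_tildephi:
  assumes k: "k \<in> carrier G" and fin: "finite (range h)"
    and lv: "\<And>r. r \<noteq> 0 \<Longrightarrow> openin tight_top {\<eta>. h \<eta> = r}"
  shows "finite (range (tildephi G \<phi> k h))"
proof (rule finite_subset)
  show "range (tildephi G \<phi> k h) \<subseteq> insert 0 (range h)" using tildephi_eq[OF k fin lv] by auto
qed (use fin in simp)

lemma tildephi_level_open:
  assumes k: "k \<in> carrier G" and fin: "finite (range h)"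
    and lv: "\<And>r. r \<noteq> 0 \<Longrightarrow> openin tight_top {\<eta>. h \<eta> = r}" and p: "p \<noteq> 0"
  shows "openin tight_top {\<xi>. tildephi G \<phi> k h \<xi> = p}"
proof -
  have "{\<xi>. tildephi G \<phi> k h \<xi> = p} = hatphi G \<phi> k {\<eta>. h \<eta> = p}"
    using tildephi_eq[OF k fin lv] mem_hatphi_iff[OF k lv[OF p]] p by auto
  thus ?thesis using hatphi_open by simp
qed

lemma skew_mult_eq:
  assumes a: "a \<in> skew_carrier G \<phi>" and b: "b \<in> skew_carrier G \<phi>"
  shows "skew_mult G \<phi> a b u \<xi> = (\<Sum>(s, t) \<in> {(s, t). a s \<noteq> (\<lambda>_. 0) \<and> b t \<noteq> (\<lambda>_. 0) \<and> s \<otimes>\<^bsub>G\<^esub> t = u}.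
       a s \<xi> * b t (theta_deg (inv\<^bsub>G\<^esub> s) \<xi>))"
  unfolding skew_mult_def
proof (intro sum.cong refl, clarify)
  fix s t assume as: "a s \<noteq> (\<lambda>_. 0)" and bt: "b t \<noteq> (\<lambda>_. 0)"
  have s: "s \<in> carrier G" using as a unfolding skew_carrier_def by blast
  have t: "t \<in> carrier G" using bt b unfolding skew_carrier_def by blast
  have s_inv: "inv\<^bsub>G\<^esub> s \<in> carrier G" using s by simp
  note a_s = skew_carrier_Lc(1)[OF a s] skew_carrier_level_open[OF a]
  define A where "A = tildephi G \<phi> (inv\<^bsub>G\<^esub> s) (a s)"
  have A: "A \<eta> = (if \<eta> \<in> tight_filters \<and> \<eta> \<in> deg_domain \<phi> (inv\<^bsub>G\<^esub> s) then a s (theta_deg s \<eta>) else 0)" for \<eta>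
    unfolding A_def using tildephi_eq[OF s_inv a_s] s by simp
  define Fn where "Fn = (\<lambda>\<eta>. A \<eta> * b t \<eta>)"
  have "range Fn \<subseteq> (\<lambda>(p, q). p * q) ` (range A \<times> range (b t))" unfolding Fn_def by auto
  hence finF: "finite (range Fn)"
    using finite_subset finite_range_tildephi[OF s_inv a_s] skew_carrier_Lc(1)[OF b t] unfolding A_def by blast
  have levF: "openin tight_top {\<eta>. Fn \<eta> = r}" if "r \<noteq> 0" for r
    unfolding Fn_def A_def
    by (rule openin_level_mult[OF tildephi_level_open[OF s_inv a_s] skew_carrier_level_open[OF b] that])
  have "tildephi G \<phi> s Fn \<xi> = (if \<xi> \<in> tight_filters \<and> \<xi> \<in> deg_domain \<phi> s then Fn (theta_deg (inv\<^bsub>G\<^esub> s) \<xi>) else 0)"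
    by (rule tildephi_eq[OF s finF levF])
  also have "\<dots> = a s \<xi> * b t (theta_deg (inv\<^bsub>G\<^esub> s) \<xi>)"
  proof (cases "\<xi> \<in> tight_filters \<and> \<xi> \<in> deg_domain \<phi> s")
    case True
    have "A (theta_deg (inv\<^bsub>G\<^esub> s) \<xi>) = a s \<xi>" using A theta_deg_props[OF s] True by simp
    thus ?thesis using True unfolding Fn_def by simp
  next
    case False
    hence "a s \<xi> = 0" using skew_carrier_nonzeroD[OF a] by blast
    thus ?thesis using False by (simp only: if_False mult_zero_left)
  qed
  finally show "tildephi G \<phi> s (\<lambda>\<eta>. tildephi G \<phi> (inv\<^bsub>G\<^esub> s) (a s) \<eta> * b t \<eta>) \<xi>
      = a s \<xi> * b t (theta_deg (inv\<^bsub>G\<^esub> s) \<xi>)"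
    unfolding Fn_def A_def .
qed

lemma skew_mult_eq_nonzero:
  assumes a: "a \<in> skew_carrier G \<phi>" and b: "b \<in> skew_carrier G \<phi>"
  shows "skew_mult G \<phi> a b u \<xi> = (\<Sum>(s, t) \<in> {(s, t). s \<otimes>\<^bsub>G\<^esub> t = u
      \<and> a s \<xi> * b t (theta_deg (inv\<^bsub>G\<^esub> s) \<xi>) \<noteq> 0}. a s \<xi> * b t (theta_deg (inv\<^bsub>G\<^esub> s) \<xi>))"
proof -
  let ?f = "\<lambda>(s, t). a s \<xi> * b t (theta_deg (inv\<^bsub>G\<^esub> s) \<xi>)"
  let ?S = "{(s, t). a s \<noteq> (\<lambda>_. 0) \<and> b t \<noteq> (\<lambda>_. 0) \<and> s \<otimes>\<^bsub>G\<^esub> t = u}"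
  have "?S \<subseteq> {s. a s \<noteq> (\<lambda>_. 0)} \<times> {t. b t \<noteq> (\<lambda>_. 0)}" by auto
  hence fin: "finite ?S" by (rule finite_subset) (use a b in \<open>auto simp: skew_carrier_def\<close>)
  have "skew_mult G \<phi> a b u \<xi> = sum ?f ?S" by (rule skew_mult_eq[OF a b])
  also have "\<dots> = sum ?f (?S - {p. ?f p = 0})" by (rule sum.setdiff_irrelevant[OF fin, symmetric])
  also have "?S - {p. ?f p = 0} = {(s, t). s \<otimes>\<^bsub>G\<^esub> t = u \<and> ?f (s, t) \<noteq> 0}" by fastforce
  finally show ?thesis by simp
qed

end

section \<open>Two pure gradings\<close>

text \<open>The \<psi>-degree of any s with \<phi> s = g and s * sinv s \<in> \<xi>; well defined on filters by
  degree_transfer.\<close>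

definition transfer_deg :: "('a::{semigroup_mult,mult_zero} \<Rightarrow> 'g1) \<Rightarrow> ('a \<Rightarrow> 'g2) \<Rightarrow> 'g1 \<Rightarrow> 'a set \<Rightarrow> 'g2" where
  "transfer_deg \<phi> \<psi> g \<xi> = \<psi> (SOME s. s \<noteq> 0 \<and> \<phi> s = g \<and> s * sinv s \<in> \<xi>)"

locale two_pure_gradings = inverse_semigroup_zero ty for ty :: "'a::{semigroup_mult,mult_zero} itself" +
  fixes G1 :: "('g1, 'b1) monoid_scheme" and \<phi>1 :: "'a \<Rightarrow> 'g1"
    and G2 :: "('g2, 'b2) monoid_scheme" and \<phi>2 :: "'a \<Rightarrow> 'g2"
  assumes pg1: "pure_grading G1 \<phi>1" and pg2: "pure_grading G2 \<phi>2"
begin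

sublocale P1: pure_graded ty G1 \<phi>1 by unfold_locales (rule pg1)
sublocale P2: pure_graded ty G2 \<phi>2 by unfold_locales (rule pg2)

text \<open>With e = s s^* t t^*, the element w = s^* e t has \<phi>1-degree 1, so it is idempotent and has
  \<phi>2-degree 1 as well; then s w t^* = e compares the \<phi>2-degrees of s and t.\<close>

lemma degree_transfer:
  assumes s0: "(s::'a) \<noteq> 0" and t0: "t \<noteq> 0" and st: "\<phi>1 s = \<phi>1 t"
    and e0: "s * sinv s * (t * sinv t) \<noteq> 0"
  shows "\<phi>2 s = \<phi>2 t"
proof -
  define e where "e = s * sinv s * (t * sinv t)"
  have ee: "e * e = e" unfolding e_def by (rule idem_mult_closed[OF range_idem range_idem])
  have e0': "e \<noteq> 0" using e0 e_def by simp
  define w where "w = sinv s * e * t"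
  have "s * w * sinv t = (s * sinv s) * e * (t * sinv t)" unfolding w_def by (simp add: mult.assoc)
  also have "\<dots> = e" unfolding e_def by (simp add: mult.assoc idem_absorb[OF range_idem] sinv_absorb(3) sinv_absorb(2))
  finally have swt: "s * w * sinv t = e" .
  have swt0: "s * w * sinv t \<noteq> 0" using swt e0' by simp
  have sw0: "s * w \<noteq> 0" using swt0 by auto
  have w0: "w \<noteq> 0" using sw0 by auto
  have se0: "sinv s * e \<noteq> 0" using w0 unfolding w_def by auto
  have g1s: "\<phi>1 s \<in> carrier G1" by (rule P1.phi_in_carrier[OF s0])
  have "\<phi>1 w = \<phi>1 (sinv s * e) \<otimes>\<^bsub>G1\<^esub> \<phi>1 t" unfolding w_def using P1.phi_mult w0 w_def by blast
  also have "\<dots> = inv\<^bsub>G1\<^esub> (\<phi>1 s) \<otimes>\<^bsub>G1\<^esub> \<one>\<^bsub>G1\<^esub> \<otimes>\<^bsub>G1\<^esub> \<phi>1 t"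
    using P1.phi_mult[OF se0] P1.phi_sinv[OF s0] P1.phi_eq_one_iff[OF e0'] ee by simp
  also have "\<dots> = \<one>\<^bsub>G1\<^esub>" using st g1s by simp
  finally have ww: "w * w = w" using P1.phi_eq_one_iff[OF w0] by simp
  have w1: "\<phi>2 w = \<one>\<^bsub>G2\<^esub>" using P2.phi_eq_one_iff[OF w0] ww by simp
  have "\<one>\<^bsub>G2\<^esub> = \<phi>2 e" using P2.phi_eq_one_iff[OF e0'] ee by simp
  also have "\<dots> = \<phi>2 (s * w) \<otimes>\<^bsub>G2\<^esub> \<phi>2 (sinv t)" using P2.phi_mult swt0 swt by metis
  also have "\<dots> = \<phi>2 s \<otimes>\<^bsub>G2\<^esub> inv\<^bsub>G2\<^esub> (\<phi>2 t)"
    using P2.phi_mult[OF sw0] w1 P2.phi_sinv[OF t0] P2.phi_in_carrier[OF s0] by simp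
  finally have "\<phi>2 s \<otimes>\<^bsub>G2\<^esub> inv\<^bsub>G2\<^esub> (\<phi>2 t) = \<one>\<^bsub>G2\<^esub>" ..
  thus ?thesis using P2.group_G.inv_solve_right'[of "\<one>\<^bsub>G2\<^esub>" "\<phi>2 s" "\<phi>2 t"] P2.phi_in_carrier[OF s0] P2.phi_in_carrier[OF t0]
    by simp
qed

lemma transfer_deg_eq:
  assumes F: "is_filter \<xi>" and s: "(s::'a) \<noteq> 0" "\<phi>1 s = g" "s * sinv s \<in> \<xi>"
  shows "transfer_deg \<phi>1 \<phi>2 g \<xi> = \<phi>2 s"
proof -
  have ex: "\<exists>s. s \<noteq> 0 \<and> \<phi>1 s = g \<and> s * sinv s \<in> \<xi>" using s by blast
  define t where "t = (SOME s. s \<noteq> 0 \<and> \<phi>1 s = g \<and> s * sinv s \<in> \<xi>)"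
  have t: "t \<noteq> 0 \<and> \<phi>1 t = g \<and> t * sinv t \<in> \<xi>" unfolding t_def by (rule someI_ex[OF ex])
  have "t * sinv t * (s * sinv s) \<in> \<xi>" using filter_mult[OF F] t s by blast
  hence "t * sinv t * (s * sinv s) \<noteq> 0" using zero_notin_filter[OF F] by auto
  hence "\<phi>2 t = \<phi>2 s" using degree_transfer[of t s] t s by simp
  thus ?thesis unfolding transfer_deg_def t_def[symmetric] .
qed

lemma deg_domain_in_carrier: "\<xi> \<in> deg_domain \<phi>2 h \<Longrightarrow> h \<in> carrier G2"
  unfolding deg_domain_def using P2.phi_in_carrier by blast

lemma theta_deg_transfer:
  assumes F: "is_filter \<xi>" and D: "\<xi> \<in> deg_domain \<phi>1 s"
  shows "P1.theta_deg (inv\<^bsub>G1\<^esub> s) \<xi> = P2.theta_deg (inv\<^bsub>G2\<^esub> (transfer_deg \<phi>1 \<phi>2 s \<xi>)) \<xi>"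
proof -
  obtain w where w: "w \<noteq> 0" "\<phi>1 w = s" "w * sinv w \<in> \<xi>" using D unfolding deg_domain_def by blast
  have ww: "sinv (sinv w) * sinv w \<in> \<xi>" using w(3) by simp
  have "P1.theta_deg (inv\<^bsub>G1\<^esub> s) \<xi> = theta (sinv w) \<xi>"
    by (rule P1.theta_deg_eq[OF F _ ww]) (use P1.phi_sinv[OF w(1)] w(2) in simp)
  moreover have "P2.theta_deg (inv\<^bsub>G2\<^esub> (transfer_deg \<phi>1 \<phi>2 s \<xi>)) \<xi> = theta (sinv w) \<xi>"
    by (rule P2.theta_deg_eq[OF F _ ww]) (use P2.phi_sinv[OF w(1)] transfer_deg_eq[OF F w] in simp)
  ultimately show ?thesis by simp
qed

lemma transfer_deg_mult:
  assumes F: "is_filter \<xi>" and D: "\<xi> \<in> deg_domain \<phi>1 s" and Dt: "P1.theta_deg (inv\<^bsub>G1\<^esub> s) \<xi> \<in> deg_domain \<phi>1 t"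
  shows "\<xi> \<in> deg_domain \<phi>1 (s \<otimes>\<^bsub>G1\<^esub> t) \<and>
    transfer_deg \<phi>1 \<phi>2 (s \<otimes>\<^bsub>G1\<^esub> t) \<xi> = transfer_deg \<phi>1 \<phi>2 s \<xi> \<otimes>\<^bsub>G2\<^esub> transfer_deg \<phi>1 \<phi>2 t (P1.theta_deg (inv\<^bsub>G1\<^esub> s) \<xi>)"
proof -
  obtain w where w: "w \<noteq> 0" "\<phi>1 w = s" "w * sinv w \<in> \<xi>" using D unfolding deg_domain_def by blast
  have ww: "sinv (sinv w) * sinv w \<in> \<xi>" using w(3) by simp
  define \<eta> where "\<eta> = theta (sinv w) \<xi>"
  have Theq: "P1.theta_deg (inv\<^bsub>G1\<^esub> s) \<xi> = \<eta>" unfolding \<eta>_def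
    by (rule P1.theta_deg_eq[OF F _ ww]) (use P1.phi_sinv[OF w(1)] w(2) in simp)
  have eF: "is_filter \<eta>" unfolding \<eta>_def by (rule theta_filter[OF F ww])
  obtain v where v: "v \<noteq> 0" "\<phi>1 v = t" "v * sinv v \<in> \<eta>" using Dt Theq unfolding deg_domain_def by auto
  have bk: "theta w \<eta> = \<xi>" unfolding \<eta>_def by (rule theta_theta_sinv[OF F w(3)])
  have "w * (v * sinv v) * sinv w \<in> \<xi>" using theta_mem[OF eF v(3), of w] bk by simp
  hence wv: "(w * v) * sinv (w * v) \<in> \<xi>" by (simp add: sinv_mult mult.assoc)
  have wv0: "w * v \<noteq> 0" using wv zero_notin_filter[OF F] by auto
  have p1: "\<phi>1 (w * v) = s \<otimes>\<^bsub>G1\<^esub> t" using P1.phi_mult[OF wv0] w v by simp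
  have "\<xi> \<in> deg_domain \<phi>1 (s \<otimes>\<^bsub>G1\<^esub> t)" unfolding deg_domain_def using wv0 p1 wv by blast
  moreover have "transfer_deg \<phi>1 \<phi>2 (s \<otimes>\<^bsub>G1\<^esub> t) \<xi> = \<phi>2 (w * v)" using transfer_deg_eq[OF F wv0 p1 wv] .
  moreover have "\<phi>2 (w * v) = \<phi>2 w \<otimes>\<^bsub>G2\<^esub> \<phi>2 v" by (rule P2.phi_mult[OF wv0])
  moreover have "transfer_deg \<phi>1 \<phi>2 s \<xi> = \<phi>2 w" by (rule transfer_deg_eq[OF F w])
  moreover have "transfer_deg \<phi>1 \<phi>2 t \<eta> = \<phi>2 v" by (rule transfer_deg_eq[OF eF v])
  ultimately show ?thesis using Theq by simp
qed

lemma swapped: "two_pure_gradings G2 \<phi>2 G1 \<phi>1"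
  using pg1 pg2 inverse_semigroup_zero_axioms
  unfolding two_pure_gradings_def two_pure_gradings_axioms_def by blast

lemma transfer_deg_inverse:
  assumes F: "is_filter \<xi>" and D: "\<xi> \<in> deg_domain \<phi>1 g"
  shows "\<xi> \<in> deg_domain \<phi>2 (transfer_deg \<phi>1 \<phi>2 g \<xi>) \<and> transfer_deg \<phi>2 \<phi>1 (transfer_deg \<phi>1 \<phi>2 g \<xi>) \<xi> = g"
proof -
  interpret B: two_pure_gradings ty G2 \<phi>2 G1 \<phi>1 by (rule swapped)
  obtain s where s: "s \<noteq> 0" "\<phi>1 s = g" "s * sinv s \<in> \<xi>" using D unfolding deg_domain_def by blast
  have c: "transfer_deg \<phi>1 \<phi>2 g \<xi> = \<phi>2 s" by (rule transfer_deg_eq[OF F s])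
  have "\<xi> \<in> deg_domain \<phi>2 (\<phi>2 s)" unfolding deg_domain_def using s by blast
  moreover have "transfer_deg \<phi>2 \<phi>1 (\<phi>2 s) \<xi> = \<phi>1 s" by (rule B.transfer_deg_eq[OF F s(1) refl s(3)])
  ultimately show ?thesis using c s by simp
qed

lemma transfer_deg_level_eq:
  "{\<xi> \<in> tight_filters \<inter> deg_domain \<phi>1 g. transfer_deg \<phi>1 \<phi>2 g \<xi> = h}
    = \<Union>(Vrange ` {s. s \<noteq> 0 \<and> \<phi>1 s = g \<and> \<phi>2 s = h})"
proof (intro equalityI subsetI)
  fix \<xi> assume \<xi>: "\<xi> \<in> {\<xi> \<in> tight_filters \<inter> deg_domain \<phi>1 g. transfer_deg \<phi>1 \<phi>2 g \<xi> = h}"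
  then obtain s where s: "s \<noteq> 0" "\<phi>1 s = g" "s * sinv s \<in> \<xi>" unfolding deg_domain_def by blast
  have "\<phi>2 s = h" using transfer_deg_eq[OF tight_filter_is_filter s] \<xi> by simp
  thus "\<xi> \<in> \<Union>(Vrange ` {s. s \<noteq> 0 \<and> \<phi>1 s = g \<and> \<phi>2 s = h})" using s \<xi> Vrange_iff by blast
next
  fix \<xi> assume "\<xi> \<in> \<Union>(Vrange ` {s. s \<noteq> 0 \<and> \<phi>1 s = g \<and> \<phi>2 s = h})"
  then obtain s where s: "s \<noteq> 0" "\<phi>1 s = g" "\<phi>2 s = h" "\<xi> \<in> tight_filters" "s * sinv s \<in> \<xi>"
    using Vrange_iff by blast
  thus "\<xi> \<in> {\<xi> \<in> tight_filters \<inter> deg_domain \<phi>1 g. transfer_deg \<phi>1 \<phi>2 g \<xi> = h}"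
    using transfer_deg_eq[OF tight_filter_is_filter[OF s(4)] s(1,2,5)] unfolding deg_domain_def by blast
qed

lemma transfer_deg_level_open:
  "openin tight_top {\<xi> \<in> tight_filters \<inter> deg_domain \<phi>1 g. transfer_deg \<phi>1 \<phi>2 g \<xi> = h}"
  unfolding transfer_deg_level_eq using Vrange_open by blast

lemma transfer_deg_level_compact:
  assumes K: "compactin tight_top K" and KD: "K \<subseteq> deg_domain \<phi>1 g"
  shows "compactin tight_top (K \<inter> {\<xi>. transfer_deg \<phi>1 \<phi>2 g \<xi> = h})"
proof -
  define Other where "Other = (\<Union>h'\<in>- {h}. {\<xi> \<in> tight_filters \<inter> deg_domain \<phi>1 g. transfer_deg \<phi>1 \<phi>2 g \<xi> = h'})"
  have "openin tight_top Other" unfolding Other_def using transfer_deg_level_open by blast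
  hence closed: "closedin tight_top (topspace tight_top - Other)" by (rule closedin_diff[OF closedin_topspace])
  have "K \<subseteq> topspace tight_top" by (rule compactin_subset_topspace[OF K])
  hence "K \<inter> {\<xi>. transfer_deg \<phi>1 \<phi>2 g \<xi> = h} = (topspace tight_top - Other) \<inter> K"
    unfolding Other_def topspace_tight_top using KD by auto
  thus ?thesis using closed_Int_compactin[OF closed K] by simp
qed

lemma finite_transfer_deg_image:
  assumes K: "compactin tight_top K" and KD: "K \<subseteq> deg_domain \<phi>1 g"
  shows "finite (transfer_deg \<phi>1 \<phi>2 g ` K)"
proof -
  define W where "W = {s. s \<noteq> 0 \<and> \<phi>1 s = g}"
  have KT: "K \<subseteq> tight_filters" using compactin_subset_topspace[OF K] topspace_tight_top by simp
  have "K \<subseteq> \<Union>(Vrange ` W)"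
  proof
    fix \<xi> assume \<xi>: "\<xi> \<in> K"
    then obtain s where "s \<noteq> 0" "\<phi>1 s = g" "s * sinv s \<in> \<xi>" using KD unfolding deg_domain_def by blast
    hence "s \<in> W" "\<xi> \<in> Vrange s" unfolding W_def using Vrange_iff[of \<xi> s] \<xi> KT by blast+
    thus "\<xi> \<in> \<Union>(Vrange ` W)" by blast
  qed
  moreover have "\<forall>U\<in>Vrange ` W. openin tight_top U" using Vrange_open by blast
  ultimately have "\<exists>F. finite F \<and> F \<subseteq> Vrange ` W \<and> K \<subseteq> \<Union>F"
    using K unfolding compactin_def by blast
  then obtain F where F: "finite F" "F \<subseteq> Vrange ` W" "K \<subseteq> \<Union>F" by blast
  obtain W' where W': "W' \<subseteq> W" "finite W'" "F = Vrange ` W'"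
    using finite_subset_image[OF F(1,2)] by blast
  have "transfer_deg \<phi>1 \<phi>2 g ` K \<subseteq> \<phi>2 ` W'"
  proof
    fix z assume "z \<in> transfer_deg \<phi>1 \<phi>2 g ` K"
    then obtain \<xi> where \<xi>: "\<xi> \<in> K" "z = transfer_deg \<phi>1 \<phi>2 g \<xi>" by blast
    then obtain s where "s \<in> W'" "\<xi> \<in> Vrange s" using F(3) W'(3) by blast
    hence s: "s \<in> W'" "\<xi> \<in> tight_filters" "s * sinv s \<in> \<xi>" using Vrange_iff by auto
    have "s \<noteq> 0" "\<phi>1 s = g" using s(1) W'(1) W_def by auto
    hence "z = \<phi>2 s" using transfer_deg_eq[OF tight_filter_is_filter[OF s(2)] _ _ s(3)] \<xi>(2) by simp
    thus "z \<in> \<phi>2 ` W'" using s(1) by simp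
  qed
  thus ?thesis using finite_subset W'(2) by blast
qed

end

text \<open>The isomorphism of the theorem: the coefficient of \<delta>_h at \<xi> is that of \<delta>_g, where g is the
  \<phi>1-degree of any s with \<phi>2 s = h and s * sinv s \<in> \<xi>.\<close>

definition Psi :: "('a::{semigroup_mult,mult_zero} \<Rightarrow> 'g1) \<Rightarrow> ('a \<Rightarrow> 'g2)
    \<Rightarrow> ('g1 \<Rightarrow> 'a set \<Rightarrow> 'r::comm_ring_1) \<Rightarrow> ('g2 \<Rightarrow> 'a set \<Rightarrow> 'r)" where
  "Psi \<phi>1 \<phi>2 a = (\<lambda>h \<xi>. if is_filter \<xi> \<and> \<xi> \<in> deg_domain \<phi>2 h then a (transfer_deg \<phi>2 \<phi>1 h \<xi>) \<xi> else 0)"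

context two_pure_gradings
begin

lemma Psi_nonzeroD:
  assumes "Psi \<phi>1 \<phi>2 a h \<xi> \<noteq> 0"
  shows "is_filter \<xi> \<and> \<xi> \<in> deg_domain \<phi>2 h \<and> a (transfer_deg \<phi>2 \<phi>1 h \<xi>) \<xi> \<noteq> 0"
  using assms unfolding Psi_def by (auto split: if_splits)

lemma Psi_eq_transfer:
  assumes "is_filter \<xi>" "\<xi> \<in> deg_domain \<phi>1 g"
  shows "Psi \<phi>1 \<phi>2 a (transfer_deg \<phi>1 \<phi>2 g \<xi>) \<xi> = a g \<xi>"
  using transfer_deg_inverse[OF assms] assms(1) unfolding Psi_def by simp

lemma Psi_level_eq:
  assumes a: "a \<in> skew_carrier G1 \<phi>1" and r: "r \<noteq> 0"
  shows "{\<xi>. Psi \<phi>1 \<phi>2 a h \<xi> = r} = (\<Union>g\<in>{g. a g \<noteq> (\<lambda>_. 0)}. {\<xi>. a g \<xi> = r}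
    \<inter> {\<xi> \<in> tight_filters \<inter> deg_domain \<phi>1 g. transfer_deg \<phi>1 \<phi>2 g \<xi> = h})"
proof (intro equalityI subsetI)
  interpret B: two_pure_gradings ty G2 \<phi>2 G1 \<phi>1 by (rule swapped)
  fix \<xi> assume "\<xi> \<in> {\<xi>. Psi \<phi>1 \<phi>2 a h \<xi> = r}"
  hence \<xi>: "Psi \<phi>1 \<phi>2 a h \<xi> = r" by simp
  define g where "g = transfer_deg \<phi>2 \<phi>1 h \<xi>"
  have n: "is_filter \<xi>" "\<xi> \<in> deg_domain \<phi>2 h" "a g \<xi> \<noteq> 0"
    using Psi_nonzeroD \<xi> r unfolding g_def by blast+
  have "a g \<xi> = r" using \<xi> n unfolding Psi_def g_def by simp
  moreover have "transfer_deg \<phi>1 \<phi>2 g \<xi> = h" using B.transfer_deg_inverse[OF n(1,2)] g_def by simp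
  moreover have "a g \<noteq> (\<lambda>_. 0)" using n(3) by auto
  ultimately show "\<xi> \<in> (\<Union>g\<in>{g. a g \<noteq> (\<lambda>_. 0)}. {\<xi>. a g \<xi> = r}
      \<inter> {\<xi> \<in> tight_filters \<inter> deg_domain \<phi>1 g. transfer_deg \<phi>1 \<phi>2 g \<xi> = h})"
    using P1.skew_carrier_nonzeroD[OF a n(3)] by blast
next
  fix \<xi> assume "\<xi> \<in> (\<Union>g\<in>{g. a g \<noteq> (\<lambda>_. 0)}. {\<xi>. a g \<xi> = r}
      \<inter> {\<xi> \<in> tight_filters \<inter> deg_domain \<phi>1 g. transfer_deg \<phi>1 \<phi>2 g \<xi> = h})"
  then obtain g where g: "a g \<xi> = r" "\<xi> \<in> tight_filters" "\<xi> \<in> deg_domain \<phi>1 g"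
    "transfer_deg \<phi>1 \<phi>2 g \<xi> = h" by blast
  have "Psi \<phi>1 \<phi>2 a (transfer_deg \<phi>1 \<phi>2 g \<xi>) \<xi> = a g \<xi>"
    by (rule Psi_eq_transfer[OF tight_filter_is_filter[OF g(2)] g(3)])
  thus "\<xi> \<in> {\<xi>. Psi \<phi>1 \<phi>2 a h \<xi> = r}" using g(1,4) by simp
qed

lemma Psi_level_Tcg:
  assumes a: "a \<in> skew_carrier G1 \<phi>1" and r: "r \<noteq> 0"
  shows "{\<xi>. Psi \<phi>1 \<phi>2 a h \<xi> = r} \<in> Tcg \<phi>2 h"
proof -
  let ?S = "{g. a g \<noteq> (\<lambda>_. 0)}"
  let ?L = "\<lambda>g. {\<xi> \<in> tight_filters \<inter> deg_domain \<phi>1 g. transfer_deg \<phi>1 \<phi>2 g \<xi> = h}"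
  have piece: "openin tight_top ({\<xi>. a g \<xi> = r} \<inter> ?L g) \<and> compactin tight_top ({\<xi>. a g \<xi> = r} \<inter> ?L g)"
    if g: "g \<in> ?S" for g
  proof -
    have gc: "g \<in> carrier G1" using a g unfolding skew_carrier_def by blast
    have K: "{\<xi>. a g \<xi> = r} \<in> Tcg \<phi>1 g" by (rule P1.skew_carrier_Lc(2)[OF a gc r])
    have KD: "{\<xi>. a g \<xi> = r} \<subseteq> tight_filters \<inter> deg_domain \<phi>1 g" by (rule P1.Tcg_subset[OF K])
    have "{\<xi>. a g \<xi> = r} \<inter> ?L g = {\<xi>. a g \<xi> = r} \<inter> {\<xi>. transfer_deg \<phi>1 \<phi>2 g \<xi> = h}"
      using KD by blast
    moreover have "compactin tight_top ({\<xi>. a g \<xi> = r} \<inter> {\<xi>. transfer_deg \<phi>1 \<phi>2 g \<xi> = h})"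
      using transfer_deg_level_compact K KD unfolding Tcg_def Tc_def by blast
    moreover have "openin tight_top ({\<xi>. a g \<xi> = r} \<inter> ?L g)"
      using K transfer_deg_level_open unfolding Tcg_def Tc_def by blast
    ultimately show ?thesis by simp
  qed
  have fin: "finite ?S" using a unfolding skew_carrier_def by blast
  have "openin tight_top {\<xi>. Psi \<phi>1 \<phi>2 a h \<xi> = r}"
    unfolding Psi_level_eq[OF a r] using piece by (intro openin_Union) auto
  moreover have "compactin tight_top {\<xi>. Psi \<phi>1 \<phi>2 a h \<xi> = r}"
    unfolding Psi_level_eq[OF a r] using piece fin by (intro compactin_Union) auto
  moreover have "{\<xi>. Psi \<phi>1 \<phi>2 a h \<xi> = r} \<subseteq> (\<Union>x\<in>Eg \<phi>2 h. Vset x {})"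
  proof
    fix \<xi> assume "\<xi> \<in> {\<xi>. Psi \<phi>1 \<phi>2 a h \<xi> = r}"
    hence n: "is_filter \<xi>" "\<xi> \<in> deg_domain \<phi>2 h" "a (transfer_deg \<phi>2 \<phi>1 h \<xi>) \<xi> \<noteq> 0"
      using Psi_nonzeroD r by auto
    have T: "\<xi> \<in> tight_filters" using P1.skew_carrier_nonzeroD[OF a n(3)] by blast
    obtain s where s: "s \<noteq> 0" "\<phi>2 s = h" "s * sinv s \<in> \<xi>" using n(2) unfolding deg_domain_def by blast
    have "s * sinv s \<in> Eg \<phi>2 h"
      by (rule P2.Eg_memI[OF _ s(1,2)]) (use range_idem idem_le_refl idems_def in auto)
    moreover have "\<xi> \<in> Vset (s * sinv s) {}" unfolding Vset_def using T s by simp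
    ultimately show "\<xi> \<in> (\<Union>x\<in>Eg \<phi>2 h. Vset x {})" by blast
  qed
  ultimately show ?thesis unfolding Tcg_def Tc_def by blast
qed

lemma Psi_finite_support:
  assumes a: "a \<in> skew_carrier G1 \<phi>1"
  shows "finite {h. Psi \<phi>1 \<phi>2 a h \<noteq> (\<lambda>_. 0)}"
proof -
  interpret B: two_pure_gradings ty G2 \<phi>2 G1 \<phi>1 by (rule swapped)
  let ?S = "{g. a g \<noteq> (\<lambda>_. 0)}"
  have sub: "{h. Psi \<phi>1 \<phi>2 a h \<noteq> (\<lambda>_. 0)} \<subseteq> (\<Union>g\<in>?S. transfer_deg \<phi>1 \<phi>2 g ` {\<xi>. a g \<xi> \<noteq> 0})"
  proof
    fix h assume "h \<in> {h. Psi \<phi>1 \<phi>2 a h \<noteq> (\<lambda>_. 0)}"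
    then obtain \<xi> where "Psi \<phi>1 \<phi>2 a h \<xi> \<noteq> 0" by auto
    hence n: "is_filter \<xi>" "\<xi> \<in> deg_domain \<phi>2 h" "a (transfer_deg \<phi>2 \<phi>1 h \<xi>) \<xi> \<noteq> 0"
      using Psi_nonzeroD by blast+
    define g where "g = transfer_deg \<phi>2 \<phi>1 h \<xi>"
    have "g \<in> ?S" "\<xi> \<in> {\<xi>. a g \<xi> \<noteq> 0}" using n(3) unfolding g_def by auto
    moreover have "h = transfer_deg \<phi>1 \<phi>2 g \<xi>"
      using B.transfer_deg_inverse[OF n(1,2)] unfolding g_def by simp
    ultimately show "h \<in> (\<Union>g\<in>?S. transfer_deg \<phi>1 \<phi>2 g ` {\<xi>. a g \<xi> \<noteq> 0})" by blast
  qed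
  have fin_image: "finite (transfer_deg \<phi>1 \<phi>2 g ` {\<xi>. a g \<xi> \<noteq> 0})" if g: "g \<in> ?S" for g
  proof (rule finite_transfer_deg_image)
    have gc: "g \<in> carrier G1" using a g unfolding skew_carrier_def by blast
    show "compactin tight_top {\<xi>. a g \<xi> \<noteq> 0}" by (rule P1.skew_carrier_support_compact[OF a gc])
    show "{\<xi>. a g \<xi> \<noteq> 0} \<subseteq> deg_domain \<phi>1 g" using P1.skew_carrier_nonzeroD[OF a] by blast
  qed
  have "finite ?S" using a unfolding skew_carrier_def by blast
  thus ?thesis using finite_subset[OF sub finite_UN_I] fin_image by blast
qed

lemma Psi_carrier:
  assumes a: "a \<in> skew_carrier G1 \<phi>1"
  shows "Psi \<phi>1 \<phi>2 a \<in> skew_carrier G2 \<phi>2"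
proof -
  let ?S = "{g. a g \<noteq> (\<lambda>_. 0)}"
  have "finite (range (Psi \<phi>1 \<phi>2 a h))" for h
  proof (rule finite_subset)
    have "a g \<xi> \<in> insert 0 (\<Union>g\<in>?S. range (a g))" for g \<xi>
      by (cases "a g \<xi> = 0") (auto intro!: exI[of _ g] simp: fun_eq_iff)
    thus "range (Psi \<phi>1 \<phi>2 a h) \<subseteq> insert 0 (\<Union>g\<in>?S. range (a g))"
      unfolding Psi_def by auto
    show "finite (insert 0 (\<Union>g\<in>?S. range (a g)))"
      using a P1.skew_carrier_Lc(1)[OF a] unfolding skew_carrier_def by auto
  qed
  moreover have "h \<in> carrier G2" if "Psi \<phi>1 \<phi>2 a h \<noteq> (\<lambda>_. 0)" for h
    using that Psi_nonzeroD deg_domain_in_carrier by fastforce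
  ultimately show ?thesis
    unfolding skew_carrier_def Lc_def using Psi_finite_support[OF a] Psi_level_Tcg[OF a] by blast
qed

lemma Psi_inverse:
  assumes a: "a \<in> skew_carrier G1 \<phi>1"
  shows "Psi \<phi>2 \<phi>1 (Psi \<phi>1 \<phi>2 a) = a"
proof (intro ext)
  fix g \<xi>
  show "Psi \<phi>2 \<phi>1 (Psi \<phi>1 \<phi>2 a) g \<xi> = a g \<xi>"
  proof (cases "is_filter \<xi> \<and> \<xi> \<in> deg_domain \<phi>1 g")
    case True
    hence "Psi \<phi>2 \<phi>1 (Psi \<phi>1 \<phi>2 a) g \<xi> = Psi \<phi>1 \<phi>2 a (transfer_deg \<phi>1 \<phi>2 g \<xi>) \<xi>"
      using transfer_deg_inverse unfolding Psi_def[of \<phi>2 \<phi>1] by simp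
    also have "\<dots> = a g \<xi>" using True by (intro Psi_eq_transfer) auto
    finally show ?thesis .
  next
    case False
    hence "a g \<xi> = 0" using P1.skew_carrier_nonzeroD[OF a] tight_filter_is_filter by blast
    thus ?thesis unfolding Psi_def using False by auto
  qed
qed

lemma Psi_add: "Psi \<phi>1 \<phi>2 (skew_add a b) = skew_add (Psi \<phi>1 \<phi>2 a) (Psi \<phi>1 \<phi>2 b)"
  unfolding Psi_def skew_add_def by (intro ext) simp

lemma Psi_smult: "Psi \<phi>1 \<phi>2 (skew_smult r a) = skew_smult r (Psi \<phi>1 \<phi>2 a)"
  unfolding Psi_def skew_smult_def by (intro ext) simp

text \<open>A nonzero term of a product over G1 at \<xi> is a nonzero term over G2 at \<xi>, after transferring
  the degrees of both factors.\<close>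

lemma skew_term_transfer:
  assumes a: "a \<in> skew_carrier G1 \<phi>1" and b: "b \<in> skew_carrier G1 \<phi>1" and F: "is_filter \<xi>"
    and nz: "a s \<xi> * b t (P1.theta_deg (inv\<^bsub>G1\<^esub> s) \<xi>) \<noteq> 0"
  defines "\<eta> \<equiv> P1.theta_deg (inv\<^bsub>G1\<^esub> s) \<xi>"
    and "s' \<equiv> transfer_deg \<phi>1 \<phi>2 s \<xi>" and "t' \<equiv> transfer_deg \<phi>1 \<phi>2 t (P1.theta_deg (inv\<^bsub>G1\<^esub> s) \<xi>)"
  shows "\<xi> \<in> deg_domain \<phi>1 (s \<otimes>\<^bsub>G1\<^esub> t)"
    and "s' \<otimes>\<^bsub>G2\<^esub> t' = transfer_deg \<phi>1 \<phi>2 (s \<otimes>\<^bsub>G1\<^esub> t) \<xi>"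
    and "P2.theta_deg (inv\<^bsub>G2\<^esub> s') \<xi> = \<eta>"
    and "Psi \<phi>1 \<phi>2 a s' \<xi> = a s \<xi>" and "Psi \<phi>1 \<phi>2 b t' \<eta> = b t \<eta>"
    and "transfer_deg \<phi>2 \<phi>1 s' \<xi> = s" and "transfer_deg \<phi>2 \<phi>1 t' \<eta> = t"
proof -
  have nz': "a s \<xi> \<noteq> 0" "b t \<eta> \<noteq> 0" using nz unfolding \<eta>_def by auto
  have Ds: "\<xi> \<in> deg_domain \<phi>1 s" using P1.skew_carrier_nonzeroD[OF a nz'(1)] by blast
  have T\<eta>: "\<eta> \<in> tight_filters" and Dt: "\<eta> \<in> deg_domain \<phi>1 t"
    using P1.skew_carrier_nonzeroD[OF b nz'(2)] by blast+
  have \<eta>F: "is_filter \<eta>" by (rule tight_filter_is_filter[OF T\<eta>])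
  show "\<xi> \<in> deg_domain \<phi>1 (s \<otimes>\<^bsub>G1\<^esub> t)" "s' \<otimes>\<^bsub>G2\<^esub> t' = transfer_deg \<phi>1 \<phi>2 (s \<otimes>\<^bsub>G1\<^esub> t) \<xi>"
    using transfer_deg_mult[OF F Ds Dt[unfolded \<eta>_def]] unfolding s'_def t'_def \<eta>_def by simp_all
  show "P2.theta_deg (inv\<^bsub>G2\<^esub> s') \<xi> = \<eta>"
    using theta_deg_transfer[OF F Ds] unfolding s'_def \<eta>_def by simp
  have t': "t' = transfer_deg \<phi>1 \<phi>2 t \<eta>" unfolding t'_def \<eta>_def ..
  show "Psi \<phi>1 \<phi>2 a s' \<xi> = a s \<xi>" unfolding s'_def by (rule Psi_eq_transfer[OF F Ds])
  show "Psi \<phi>1 \<phi>2 b t' \<eta> = b t \<eta>" unfolding t' by (rule Psi_eq_transfer[OF \<eta>F Dt])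
  show "transfer_deg \<phi>2 \<phi>1 s' \<xi> = s" "transfer_deg \<phi>2 \<phi>1 t' \<eta> = t"
    using transfer_deg_inverse[OF F Ds] transfer_deg_inverse[OF \<eta>F Dt] unfolding s'_def t' by simp_all
qed

lemma skew_mult_Psi_outside:
  assumes a: "a \<in> skew_carrier G1 \<phi>1" and b: "b \<in> skew_carrier G1 \<phi>1"
    and out: "\<not> (is_filter \<xi> \<and> \<xi> \<in> deg_domain \<phi>2 h)"
  shows "skew_mult G2 \<phi>2 (Psi \<phi>1 \<phi>2 a) (Psi \<phi>1 \<phi>2 b) h \<xi> = 0"
proof -
  interpret B: two_pure_gradings ty G2 \<phi>2 G1 \<phi>1 by (rule swapped)
  have a': "Psi \<phi>1 \<phi>2 a \<in> skew_carrier G2 \<phi>2" and b': "Psi \<phi>1 \<phi>2 b \<in> skew_carrier G2 \<phi>2"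
    using Psi_carrier a b by blast+
  have "Psi \<phi>1 \<phi>2 a s \<xi> * Psi \<phi>1 \<phi>2 b t (P2.theta_deg (inv\<^bsub>G2\<^esub> s) \<xi>) = 0"
    if st: "s \<otimes>\<^bsub>G2\<^esub> t = h" for s t
  proof (rule ccontr)
    assume nz: "Psi \<phi>1 \<phi>2 a s \<xi> * Psi \<phi>1 \<phi>2 b t (P2.theta_deg (inv\<^bsub>G2\<^esub> s) \<xi>) \<noteq> 0"
    hence "Psi \<phi>1 \<phi>2 a s \<xi> \<noteq> 0" by auto
    hence F: "is_filter \<xi>" using Psi_nonzeroD by blast
    show False using B.skew_term_transfer(1)[OF a' b' F nz] st out F by simp
  qed
  thus ?thesis unfolding P2.skew_mult_eq_nonzero[OF a' b'] by (simp add: case_prod_beta)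
qed

lemma skew_mult_Psi_inside:
  assumes a: "a \<in> skew_carrier G1 \<phi>1" and b: "b \<in> skew_carrier G1 \<phi>1"
    and F: "is_filter \<xi>" and Dh: "\<xi> \<in> deg_domain \<phi>2 h"
  shows "skew_mult G1 \<phi>1 a b (transfer_deg \<phi>2 \<phi>1 h \<xi>) \<xi>
    = skew_mult G2 \<phi>2 (Psi \<phi>1 \<phi>2 a) (Psi \<phi>1 \<phi>2 b) h \<xi>"
proof -
  interpret B: two_pure_gradings ty G2 \<phi>2 G1 \<phi>1 by (rule swapped)
  define a' where "a' = Psi \<phi>1 \<phi>2 a"
  define b' where "b' = Psi \<phi>1 \<phi>2 b"
  have a': "a' \<in> skew_carrier G2 \<phi>2" unfolding a'_def by (rule Psi_carrier[OF a])
  have b': "b' \<in> skew_carrier G2 \<phi>2" unfolding b'_def by (rule Psi_carrier[OF b])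
  have Psi_back: "Psi \<phi>2 \<phi>1 a' = a" "Psi \<phi>2 \<phi>1 b' = b"
    unfolding a'_def b'_def using Psi_inverse[OF a] Psi_inverse[OF b] by simp_all
  define g where "g = transfer_deg \<phi>2 \<phi>1 h \<xi>"
  have gh: "transfer_deg \<phi>1 \<phi>2 g \<xi> = h" using B.transfer_deg_inverse[OF F Dh] unfolding g_def by simp
  define f1 where "f1 = (\<lambda>(s, t). a s \<xi> * b t (P1.theta_deg (inv\<^bsub>G1\<^esub> s) \<xi>))"
  define f2 where "f2 = (\<lambda>(s, t). a' s \<xi> * b' t (P2.theta_deg (inv\<^bsub>G2\<^esub> s) \<xi>))"
  define N1 where "N1 = {(s, t). s \<otimes>\<^bsub>G1\<^esub> t = g \<and> f1 (s, t) \<noteq> 0}"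
  define N2 where "N2 = {(s, t). s \<otimes>\<^bsub>G2\<^esub> t = h \<and> f2 (s, t) \<noteq> 0}"
  define j where "j = (\<lambda>(s, t). (transfer_deg \<phi>1 \<phi>2 s \<xi>,
    transfer_deg \<phi>1 \<phi>2 t (P1.theta_deg (inv\<^bsub>G1\<^esub> s) \<xi>)))"
  define i where "i = (\<lambda>(s, t). (transfer_deg \<phi>2 \<phi>1 s \<xi>,
    transfer_deg \<phi>2 \<phi>1 t (P2.theta_deg (inv\<^bsub>G2\<^esub> s) \<xi>)))"
  have j: "j p \<in> N2 \<and> i (j p) = p \<and> f2 (j p) = f1 p" if p: "p \<in> N1" for p
  proof -
    obtain s t where st: "p = (s, t)" "s \<otimes>\<^bsub>G1\<^esub> t = g"
      and nz: "a s \<xi> * b t (P1.theta_deg (inv\<^bsub>G1\<^esub> s) \<xi>) \<noteq> 0"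
      using p unfolding N1_def f1_def by auto
    note T = skew_term_transfer[OF a b F nz]
    have "f2 (j p) = f1 p" unfolding st(1) j_def f1_def f2_def a'_def b'_def using T(3-5) by simp
    moreover have "i (j p) = p" unfolding st(1) j_def i_def using T(3,6,7) by simp
    moreover have "fst (j p) \<otimes>\<^bsub>G2\<^esub> snd (j p) = h" unfolding st(1) j_def using T(2) st(2) gh by simp
    ultimately show ?thesis using nz unfolding N2_def st(1) f1_def by (auto simp: case_prod_beta)
  qed
  have i: "i q \<in> N1 \<and> j (i q) = q" if q: "q \<in> N2" for q
  proof -
    obtain s t where st: "q = (s, t)" "s \<otimes>\<^bsub>G2\<^esub> t = h"
      and nz: "a' s \<xi> * b' t (P2.theta_deg (inv\<^bsub>G2\<^esub> s) \<xi>) \<noteq> 0"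
      using q unfolding N2_def f2_def by auto
    note T = B.skew_term_transfer[OF a' b' F nz, unfolded Psi_back]
    have "f1 (i q) = f2 q" unfolding st(1) i_def f1_def f2_def using T(3-5) by simp
    moreover have "j (i q) = q" unfolding st(1) j_def i_def using T(3,6,7) by simp
    moreover have "fst (i q) \<otimes>\<^bsub>G1\<^esub> snd (i q) = g" unfolding st(1) i_def g_def using T(2) st(2) by simp
    ultimately show ?thesis using nz unfolding N1_def st(1) f2_def by (auto simp: case_prod_beta)
  qed
  have "sum f1 N1 = sum f2 N2"
    by (rule sum.reindex_bij_witness[of N1 i j N2]) (use i j in auto)
  thus ?thesis unfolding g_def[symmetric] a'_def[symmetric] b'_def[symmetric]
    unfolding P1.skew_mult_eq_nonzero[OF a b] P2.skew_mult_eq_nonzero[OF a' b'] f1_def f2_def N1_def N2_def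
    by simp
qed

lemma Psi_mult:
  assumes a: "a \<in> skew_carrier G1 \<phi>1" and b: "b \<in> skew_carrier G1 \<phi>1"
  shows "Psi \<phi>1 \<phi>2 (skew_mult G1 \<phi>1 a b) = skew_mult G2 \<phi>2 (Psi \<phi>1 \<phi>2 a) (Psi \<phi>1 \<phi>2 b)"
proof (intro ext)
  fix h \<xi>
  show "Psi \<phi>1 \<phi>2 (skew_mult G1 \<phi>1 a b) h \<xi> = skew_mult G2 \<phi>2 (Psi \<phi>1 \<phi>2 a) (Psi \<phi>1 \<phi>2 b) h \<xi>"
    using skew_mult_Psi_inside[OF a b] skew_mult_Psi_outside[OF a b] unfolding Psi_def[of _ _ "skew_mult G1 \<phi>1 a b"]
    by auto
qed

end

theorem mainTheorem14:
  fixes G1 :: "('g1, 'b1) monoid_scheme" and \<phi>1 :: "'a::{semigroup_mult,mult_zero} \<Rightarrow> 'g1"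
    and G2 :: "('g2, 'b2) monoid_scheme" and \<phi>2 :: "'a \<Rightarrow> 'g2"
  assumes "inverse_semigroup_with_zero TYPE('a)"
    and "pure_grading G1 \<phi>1"
    and "pure_grading G2 \<phi>2"
  shows "LR_isomorphic G1 \<phi>1 G2 \<phi>2 TYPE('r::comm_ring_1)"
proof -
  interpret A: two_pure_gradings "TYPE('a)" G1 \<phi>1 G2 \<phi>2 by unfold_locales (use assms in auto)
  interpret B: two_pure_gradings "TYPE('a)" G2 \<phi>2 G1 \<phi>1 by (rule A.swapped)
  let ?P = "Psi \<phi>1 \<phi>2 :: ('g1 \<Rightarrow> 'a set \<Rightarrow> 'r) \<Rightarrow> ('g2 \<Rightarrow> 'a set \<Rightarrow> 'r)"
  have "bij_betw ?P (skew_carrier G1 \<phi>1) (skew_carrier G2 \<phi>2)"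
  proof (rule bij_betw_byWitness[where f' = "Psi \<phi>2 \<phi>1"])
    show "\<forall>a\<in>skew_carrier G1 \<phi>1. Psi \<phi>2 \<phi>1 (?P a) = a" using A.Psi_inverse by blast
    show "\<forall>a\<in>skew_carrier G2 \<phi>2. ?P (Psi \<phi>2 \<phi>1 a) = a" using B.Psi_inverse by blast
    show "?P ` skew_carrier G1 \<phi>1 \<subseteq> skew_carrier G2 \<phi>2" using A.Psi_carrier by blast
    show "Psi \<phi>2 \<phi>1 ` skew_carrier G2 \<phi>2 \<subseteq> skew_carrier G1 \<phi>1" using B.Psi_carrier by blast
  qed
  thus ?thesis unfolding LR_isomorphic_def
    by (intro exI[of _ ?P] conjI) (simp_all add: A.Psi_add A.Psi_mult A.Psi_smult)
qed

end
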